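(* Let $n,k,d$ be integers with $k < d \le n-1$, put $q = d-k+1$, and suppose $n = (t-1)q + s$ for integers $t > 1$ and $1 \le s \le d-k$. Let $\alpha = q^t$. Let $\mathcal{N} = \{(j,\theta): j\in[t-1],\ \theta\in\{0,\dots,q-1\}\} \cup \{(t,\theta): \theta\in\{0,\dots,s-1\}\}$ (so $|\mathcal{N}| = n$), and index node $(j,\theta)$ by $\iota(j,\theta) = (j-1)q+\theta+1 \in [n]$. Let $\mathbb{F}_Q$ be a finite field, let $a_1,\dots,a_{n-k},b_1,\dots,b_n$ be $2n-k$ distinct elements of $\mathbb{F}_Q$, and let $H_{MDS}$ be the $(n-k)\times n$ Cauchy matrix with entries $(H_{MDS})_{r,m} = \frac{1}{a_r - b_m}$. For $\rho \in \mathbb{F}_Q$, define the $(n-k)\alpha \times n\alpha$ matrix $\mathbf{H}_\rho = H_{MDS}\otimes \mathbf{I}_\alpha + \mathbf{E}^{\rho}$ as follows. Rows are indexed by pairs $(r,x)$ with $r\in[n-k]$, $x=(x_1,\dots,x_t)\in\{0,\dots,q-1\}^t$; columns are indexed by pairs $(v,y)$ with $v\in\mathcal{N}$, $y\in\{0,\dots,q-1\}^t$ (the column block of node $v$ being the $\iota(v)$-th block of $\alpha$ columns, with a fixed ordering of $\{0,\dots,q-1\}^t$ used consistently for rows and columns within blocks). Then $$(\mathbf{H}_\rho)_{(r,x),(v,y)} = \frac{1}{a_r - b_{\iota(v)}}\,\mathbb{1}_{\{x=y\}} + \rho\cdot \mathbb{1}_{\{r>n-d\ \text{and}\ \exists j\in[t]:\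 v=(j,x_j),\ y = x - \Delta e_j\}},$$ where $\Delta = r-(n-d)\in[1,d-k]$, $e_j$ is the $j$-th unit vector, and $x-\Delta e_j$ is computed coordinatewise modulo $q$ (for $j=t$ the condition can only hold when $x_t < s$, since node $(t,x_t)$ exists only then). Let $\mathcal{C}_\rho = \{\mathbf{c}\in\mathbb{F}_Q^{n\alpha} : \mathbf{H}_\rho \mathbf{c} = 0\}$. Then, if $Q$ is sufficiently large, there exists $\rho\in\mathbb{F}_Q^{\ast}$ such that $\mathcal{C}_\rho$ is an MDS vector code, i.e., an $[n, k\alpha, d_{\min}, \alpha]_Q$ linear vector code with $d_{\min} = n-k+1$.
   Context: A vector $\mathbf{c}\in\mathbb{F}_Q^{n\alpha}$ is viewed as $n$ vector symbols $\mathbf{c}_m = (c_{(m-1)\alpha+1},\dots,c_{m\alpha})$, $m\in[n]$ (the $m$-th symbol being the contents of the node $v$ with $\iota(v)=m$). The Hamming distance between $\mathbf{x},\mathbf{y}\in\mathbb{F}_Q^{n\alpha}$ is $d_H(\mathbf{x},\mathbf{y}) = \sum_{m=1}^n \mathbb{1}_{\{\mathbf{x}_m\neq \mathbf{y}_m\}}$. A linear subspace $\mathcal{C}\subseteq\mathbb{F}_Q^{n\alpha}$ of $\mathbb{F}_Q$-dimension $K$ with minimum (nonzero-pair) distance $d_{\min}$ under $d_H$ is called an $[n,K,d_{\min},\alpha]_Q$ vector code. $\mathbf{I}_\alpha$ is the $\alpha\times\alpha$ identity matrix and $\otimes$ the Kronecker product. $[m]=\{1,\dots,m\}$, and $\mathbb{1}_{\{\cdot\}}$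 is the indicator function. *)

theory Defs
  imports "HOL-Algebra.Ring" "HOL-Library.FuncSet"
begin

definition cs_states :: "nat \<Rightarrow> nat \<Rightarrow> (nat \<Rightarrow> nat) set" where
  "cs_states t q = PiE {1..t} (\<lambda>_. {..<q})"

definition cs_nodes :: "nat \<Rightarrow> nat \<Rightarrow> nat \<Rightarrow> (nat \<times> nat) set" where
  "cs_nodes t q s = {(j,\<theta>). 1 \<le> j \<and> j \<le> t - 1 \<and> \<theta> < q} \<union> {(j,\<theta>). j = t \<and> \<theta> < s}"

definition cs_iota :: "nat \<Rightarrow> nat \<times> nat \<Rightarrow> nat" where
  "cs_iota q v = (fst v - 1) * q + snd v + 1"

definition cs_shift :: "nat \<Rightarrow> (nat \<Rightarrow> nat) \<Rightarrow> nat \<Rightarrow> nat \<Rightarrow> (nat \<Rightarrow> nat)" where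
  "cs_shift q x j \<Delta> = x(j := nat ((int (x j) - int \<Delta>) mod int q))"

definition cs_H :: "('f, 'm) ring_scheme \<Rightarrow> (nat \<Rightarrow> 'f) \<Rightarrow> (nat \<Rightarrow> 'f) \<Rightarrow> nat \<Rightarrow> nat \<Rightarrow> nat \<Rightarrow> nat
    \<Rightarrow> 'f \<Rightarrow> nat \<times> (nat \<Rightarrow> nat) \<Rightarrow> (nat \<times> nat) \<times> (nat \<Rightarrow> nat) \<Rightarrow> 'f" where
  "cs_H R a b n d t q \<rho> row col =
     (let r = fst row; x = snd row; v = fst col; y = snd col; \<Delta> = r - (n - d) in
      add R
        (if x = y then m_inv R (a_minus R (a r) (b (cs_iota q v))) else zero R)
        (if n - d < r \<and> (\<exists>j\<in>{1..t}. v = (j, x j) \<and> y = cs_shift q x j \<Delta>) then \<rho> else zero R))"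

definition cs_code :: "('f, 'm) ring_scheme \<Rightarrow> (nat \<Rightarrow> 'f) \<Rightarrow> (nat \<Rightarrow> 'f) \<Rightarrow> nat \<Rightarrow> nat \<Rightarrow> nat
    \<Rightarrow> nat \<Rightarrow> nat \<Rightarrow> 'f \<Rightarrow> ((nat \<times> nat) \<times> (nat \<Rightarrow> nat) \<Rightarrow> 'f) set" where
  "cs_code R a b n k d t s \<rho> =
     (let q = d - k + 1 in
      {c \<in> PiE (cs_nodes t q s \<times> cs_states t q) (\<lambda>_. carrier R).
         \<forall>r\<in>{1..n-k}. \<forall>x\<in>cs_states t q.
           finsum R (\<lambda>col. mult R (cs_H R a b n d t q \<rho> (r, x) col) (c col))
                    (cs_nodes t q s \<times> cs_states t q) = zero R})"

(* Generic vector-code notions: vectors over the coordinate set V \<times> Y, the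
   symbols being indexed by V (each symbol is a vector in F^Y). *)
definition hamming :: "'v set \<Rightarrow> 'y set \<Rightarrow> ('v \<times> 'y \<Rightarrow> 'f) \<Rightarrow> ('v \<times> 'y \<Rightarrow> 'f) \<Rightarrow> nat" where
  "hamming V Y c c' = card {v \<in> V. (\<lambda>y\<in>Y. c (v, y)) \<noteq> (\<lambda>y\<in>Y. c' (v, y))}"

definition lin_subspace :: "('f, 'm) ring_scheme \<Rightarrow> 'i set \<Rightarrow> ('i \<Rightarrow> 'f) set \<Rightarrow> bool" where
  "lin_subspace R I C \<longleftrightarrow> C \<subseteq> PiE I (\<lambda>_. carrier R) \<and> (\<lambda>i\<in>I. zero R) \<in> C \<and>
     (\<forall>u\<in>C. \<forall>w\<in>C. (\<lambda>i\<in>I. add R (u i) (w i)) \<in> C) \<and>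
     (\<forall>l\<in>carrier R. \<forall>u\<in>C. (\<lambda>i\<in>I. mult R l (u i)) \<in> C)"

definition lin_comb :: "('f, 'm) ring_scheme \<Rightarrow> 'i set \<Rightarrow> ('i \<Rightarrow> 'f) set \<Rightarrow> (('i \<Rightarrow> 'f) \<Rightarrow> 'f) \<Rightarrow> ('i \<Rightarrow> 'f)" where
  "lin_comb R I B f = (\<lambda>i\<in>I. finsum R (\<lambda>u. mult R (f u) (u i)) B)"

definition lin_indep :: "('f, 'm) ring_scheme \<Rightarrow> 'i set \<Rightarrow> ('i \<Rightarrow> 'f) set \<Rightarrow> bool" where
  "lin_indep R I B \<longleftrightarrow> finite B \<and>
     (\<forall>f \<in> B \<rightarrow> carrier R. lin_comb R I B f = (\<lambda>i\<in>I. zero R) \<longrightarrow> (\<forall>u\<in>B. f u = zero R))"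

definition lin_span :: "('f, 'm) ring_scheme \<Rightarrow> 'i set \<Rightarrow> ('i \<Rightarrow> 'f) set \<Rightarrow> ('i \<Rightarrow> 'f) set" where
  "lin_span R I B = {lin_comb R I B f | f. f \<in> B \<rightarrow> carrier R}"

definition has_dim :: "('f, 'm) ring_scheme \<Rightarrow> 'i set \<Rightarrow> ('i \<Rightarrow> 'f) set \<Rightarrow> nat \<Rightarrow> bool" where
  "has_dim R I C K \<longleftrightarrow> (\<exists>B. B \<subseteq> C \<and> card B = K \<and> lin_indep R I B \<and> lin_span R I B = C)"

definition is_vector_code :: "('f, 'm) ring_scheme \<Rightarrow> 'v set \<Rightarrow> 'y set \<Rightarrow> ('v \<times> 'y \<Rightarrow> 'f) set
    \<Rightarrow> nat \<Rightarrow> nat \<Rightarrow> nat \<Rightarrow> nat \<Rightarrow> bool" where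
  "is_vector_code R V Y C n K dmin \<alpha> \<longleftrightarrow> card V = n \<and> card Y = \<alpha> \<and>
     lin_subspace R (V \<times> Y) C \<and> has_dim R (V \<times> Y) C K \<and>
     (\<forall>c\<in>C. \<forall>c'\<in>C. c \<noteq> c' \<longrightarrow> dmin \<le> hamming V Y c c') \<and>
     (\<exists>c\<in>C. \<exists>c'\<in>C. c \<noteq> c' \<and> hamming V Y c c' = dmin)"

end

theory Submission
  imports Defs "HOL-Algebra.Multiplicative_Group"
begin

text \<open>
  Fix a set \<open>S\<close> of \<open>n - k\<close> nodes. The columns of \<open>H\<^sub>\<rho>\<close> belonging to \<open>S\<close> form a square matrix
  \<open>M + \<rho> E\<close>, where \<open>M\<close> is a square Cauchy submatrix of the MDS matrix tensored with \<open>I\<^sub>\<alpha>\<close> and hence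
  nonsingular. Kernel vectors of \<open>M + \<rho> E\<close> for distinct nonzero \<open>\<rho>\<close> are generalized eigenvectors
  of the pencil for distinct eigenvalues, hence linearly independent, so at most \<open>(n - k) \<alpha>\<close>
  values of \<open>\<rho>\<close> make this block singular. Once \<open>Q > 2\<^sup>n (n - k) \<alpha> + 1\<close>, some \<open>\<rho> \<noteq> 0\<close> keeps
  the columns of every set of \<open>n - k\<close> nodes independent. Then a nonzero codeword cannot vanish
  outside \<open>n - k\<close> nodes, so \<open>d\<^sub>m\<^sub>i\<^sub>n \<ge> n - k + 1\<close>, and any \<open>k\<close> nodes form an information set, which
  gives dimension \<open>k \<alpha>\<close> and a codeword of weight exactly \<open>n - k + 1\<close>.
\<close>

section \<open>Matrix--vector products\<close>

definition mat_vec :: "('f,'m) ring_scheme \<Rightarrow> ('i \<Rightarrow> 'j \<Rightarrow> 'f) \<Rightarrow> 'j set \<Rightarrow> ('j \<Rightarrow> 'f) \<Rightarrow> 'i \<Rightarrow> 'f" where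
  "mat_vec R M J w i = finsum R (\<lambda>j. mult R (M i j) (w j)) J"

lemma (in abelian_monoid) finsum_swap:
  assumes "finite A" "finite B" "\<And>a b. a \<in> A \<Longrightarrow> b \<in> B \<Longrightarrow> f a b \<in> carrier G"
  shows "(\<Oplus>a\<in>A. \<Oplus>b\<in>B. f a b) = (\<Oplus>b\<in>B. \<Oplus>a\<in>A. f a b)"
  using assms(1,3)
proof (induction A rule: finite_induct)
  case (insert x F)
  have "(\<Oplus>a\<in>insert x F. \<Oplus>b\<in>B. f a b) = (\<Oplus>b\<in>B. f x b) \<oplus> (\<Oplus>b\<in>B. \<Oplus>a\<in>F. f a b)"
    using insert by (subst finsum_insert) (auto intro!: finsum_closed)
  also have "\<dots> = (\<Oplus>b\<in>B. f x b \<oplus> (\<Oplus>a\<in>F. f a b))"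
    using insert by (subst finsum_addf) (auto intro!: finsum_closed)
  also have "\<dots> = (\<Oplus>b\<in>B. \<Oplus>a\<in>insert x F. f a b)"
    using insert by (intro finsum_cong') (auto intro!: finsum_closed)
  finally show ?case .
qed (simp add: finsum_zero)

context cring
begin

lemma finsum_diff:
  assumes "f \<in> A \<rightarrow> carrier R" "g \<in> A \<rightarrow> carrier R"
  shows "(\<Oplus>x\<in>A. f x \<ominus> g x) = (\<Oplus>x\<in>A. f x) \<ominus> (\<Oplus>x\<in>A. g x)"
proof (cases "finite A")
  case True
  have "(\<Oplus>x\<in>A. f x \<ominus> g x) = (\<Oplus>x\<in>A. f x \<oplus> (\<ominus>\<one>) \<otimes> g x)"
    using assms by (intro finsum_cong') (auto simp: minus_eq l_minus Pi_iff)
  also have "\<dots> = (\<Oplus>x\<in>A. f x) \<oplus> (\<ominus>\<one>) \<otimes> (\<Oplus>x\<in>A. g x)"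
    using assms True by (simp add: finsum_addf finsum_rdistr Pi_def)
  also have "\<dots> = (\<Oplus>x\<in>A. f x) \<ominus> (\<Oplus>x\<in>A. g x)"
    using assms by (simp add: minus_eq l_minus finsum_closed)
  finally show ?thesis .
qed (simp add: finsum_infinite minus_eq)

lemma mat_vec_closed:
  assumes "\<And>j. j \<in> J \<Longrightarrow> M i j \<in> carrier R" "\<And>j. j \<in> J \<Longrightarrow> w j \<in> carrier R"
  shows "mat_vec R M J w i \<in> carrier R"
  unfolding mat_vec_def using assms by (intro finsum_closed) auto

lemma mat_vec_cong:
  assumes "\<And>j. j \<in> J \<Longrightarrow> w1 j = w2 j" "\<And>j. j \<in> J \<Longrightarrow> M i j \<in> carrier R"
    "\<And>j. j \<in> J \<Longrightarrow> w2 j \<in> carrier R"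
  shows "mat_vec R M J w1 i = mat_vec R M J w2 i"
  unfolding mat_vec_def using assms by (intro finsum_cong') auto

lemma mat_vec_zero:
  assumes "\<And>j. j \<in> J \<Longrightarrow> M i j \<in> carrier R" "\<And>j. j \<in> J \<Longrightarrow> w j = \<zero>"
  shows "mat_vec R M J w i = \<zero>"
  unfolding mat_vec_def using assms by (intro add.finprod_one_eqI) auto

lemma mat_vec_diff:
  assumes "\<And>j. j \<in> J \<Longrightarrow> M i j \<in> carrier R" "\<And>j. j \<in> J \<Longrightarrow> w1 j \<in> carrier R"
     "\<And>j. j \<in> J \<Longrightarrow> w2 j \<in> carrier R"
  shows "mat_vec R M J (\<lambda>j. w1 j \<ominus> w2 j) i = mat_vec R M J w1 i \<ominus> mat_vec R M J w2 i"
proof -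
  have "mat_vec R M J (\<lambda>j. w1 j \<ominus> w2 j) i = (\<Oplus>j\<in>J. M i j \<otimes> w1 j \<ominus> M i j \<otimes> w2 j)"
    unfolding mat_vec_def using assms by (intro finsum_cong') (auto simp: r_minus minus_eq r_distr)
  also have "\<dots> = mat_vec R M J w1 i \<ominus> mat_vec R M J w2 i"
    unfolding mat_vec_def using assms by (intro finsum_diff) auto
  finally show ?thesis .
qed

lemma mat_vec_lincomb:
  assumes "\<And>j. j \<in> J \<Longrightarrow> M i j \<in> carrier R" "\<And>j. j \<in> J \<Longrightarrow> w1 j \<in> carrier R"
     "\<And>j. j \<in> J \<Longrightarrow> w2 j \<in> carrier R" "l \<in> carrier R"
  shows "mat_vec R M J (\<lambda>j. w1 j \<oplus> l \<otimes> w2 j) i = mat_vec R M J w1 i \<oplus> l \<otimes> mat_vec R M J w2 i"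
proof -
  have "mat_vec R M J (\<lambda>j. w1 j \<oplus> l \<otimes> w2 j) i = (\<Oplus>j\<in>J. M i j \<otimes> w1 j \<oplus> l \<otimes> (M i j \<otimes> w2 j))"
    unfolding mat_vec_def using assms by (intro finsum_cong') (auto simp: r_distr m_lcomm)
  also have "\<dots> = mat_vec R M J w1 i \<oplus> l \<otimes> mat_vec R M J w2 i"
    unfolding mat_vec_def using assms
    by (cases "finite J") (auto simp: finsum_addf finsum_rdistr finsum_infinite)
  finally show ?thesis .
qed

lemma mat_vec_pencil:
  assumes "\<And>j. j \<in> J \<Longrightarrow> M i j \<in> carrier R" "\<And>j. j \<in> J \<Longrightarrow> E i j \<in> carrier R"
    "\<And>j. j \<in> J \<Longrightarrow> w j \<in> carrier R" "\<rho> \<in> carrier R"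
  shows "mat_vec R (\<lambda>i j. M i j \<oplus> \<rho> \<otimes> E i j) J w i = mat_vec R M J w i \<oplus> \<rho> \<otimes> mat_vec R E J w i"
proof -
  have "mat_vec R (\<lambda>i j. M i j \<oplus> \<rho> \<otimes> E i j) J w i = (\<Oplus>j\<in>J. M i j \<otimes> w j \<oplus> \<rho> \<otimes> (E i j \<otimes> w j))"
    unfolding mat_vec_def using assms by (intro finsum_cong') (auto simp: l_distr m_assoc)
  also have "\<dots> = mat_vec R M J w i \<oplus> \<rho> \<otimes> mat_vec R E J w i"
    unfolding mat_vec_def using assms
    by (cases "finite J") (auto simp: finsum_addf finsum_rdistr finsum_infinite)
  finally show ?thesis .
qed

lemma mat_vec_finsum:
  assumes "finite J" "finite P" "\<And>j. j \<in> J \<Longrightarrow> M i j \<in> carrier R"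
    "\<And>p j. p \<in> P \<Longrightarrow> j \<in> J \<Longrightarrow> W p j \<in> carrier R" "\<And>p. p \<in> P \<Longrightarrow> c p \<in> carrier R"
  shows "mat_vec R M J (\<lambda>j. \<Oplus>p\<in>P. c p \<otimes> W p j) i = (\<Oplus>p\<in>P. c p \<otimes> mat_vec R M J (W p) i)"
proof -
  have "mat_vec R M J (\<lambda>j. \<Oplus>p\<in>P. c p \<otimes> W p j) i = (\<Oplus>j\<in>J. \<Oplus>p\<in>P. c p \<otimes> (M i j \<otimes> W p j))"
    unfolding mat_vec_def using assms
    by (intro finsum_cong') (auto simp: finsum_rdistr m_lcomm Pi_def intro!: finsum_cong')
  also have "\<dots> = (\<Oplus>p\<in>P. \<Oplus>j\<in>J. c p \<otimes> (M i j \<otimes> W p j))"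
    using assms by (intro finsum_swap) auto
  also have "\<dots> = (\<Oplus>p\<in>P. c p \<otimes> mat_vec R M J (W p) i)"
    unfolding mat_vec_def using assms by (intro finsum_cong') (auto simp: finsum_rdistr)
  finally show ?thesis .
qed

lemma mat_vec_mono_neutral:
  assumes "finite J" "J' \<subseteq> J" "\<And>j. j \<in> J \<Longrightarrow> M i j \<in> carrier R"
    "\<And>j. j \<in> J \<Longrightarrow> w j \<in> carrier R" "\<And>j. j \<in> J - J' \<Longrightarrow> w j = \<zero>"
  shows "mat_vec R M J' w i = mat_vec R M J w i"
  unfolding mat_vec_def using assms by (intro add.finprod_mono_neutral_cong_left) auto

lemma mat_vec_Un_disjoint:
  assumes "finite J1" "finite J2" "J1 \<inter> J2 = {}"
    "\<And>j. j \<in> J1 \<union> J2 \<Longrightarrow> M i j \<in> carrier R" "\<And>j. j \<in> J1 \<union> J2 \<Longrightarrow> w j \<in> carrier R"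
  shows "mat_vec R M (J1 \<union> J2) w i = mat_vec R M J1 w i \<oplus> mat_vec R M J2 w i"
  unfolding mat_vec_def using assms by (intro finsum_Un_disjoint) auto

lemma mat_vec_inj_on_if_kernel_trivial:
  assumes M: "\<And>i j. i \<in> I \<Longrightarrow> j \<in> J \<Longrightarrow> M i j \<in> carrier R"
    and ker: "\<And>w. w \<in> J \<rightarrow> carrier R \<Longrightarrow> \<forall>i\<in>I. mat_vec R M J w i = \<zero> \<Longrightarrow> \<forall>j\<in>J. w j = \<zero>"
  shows "inj_on (\<lambda>w. restrict (mat_vec R M J w) I) (J \<rightarrow>\<^sub>E carrier R)"
proof (rule inj_onI)
  fix w1 w2 assume w: "w1 \<in> J \<rightarrow>\<^sub>E carrier R" "w2 \<in> J \<rightarrow>\<^sub>E carrier R"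
    and eq: "restrict (mat_vec R M J w1) I = restrict (mat_vec R M J w2) I"
  have "mat_vec R M J (\<lambda>j. w1 j \<ominus> w2 j) i = \<zero>" if "i \<in> I" for i
  proof -
    have "mat_vec R M J w2 i \<in> carrier R" using that w M by (intro mat_vec_closed) auto
    then show ?thesis
      using fun_cong[OF eq, of i] that w M by (subst mat_vec_diff) auto
  qed
  then have "\<forall>j\<in>J. w1 j \<ominus> w2 j = \<zero>"
    using w by (intro ker) auto
  then show "w1 = w2"
    using w by (intro PiE_ext[OF w]) (metis PiE_mem r_right_minus_eq)
qed

lemma mat_vec_restrict_in_PiE:
  assumes "\<And>i j. i \<in> I \<Longrightarrow> j \<in> J \<Longrightarrow> M i j \<in> carrier R" "w \<in> J \<rightarrow> carrier R"
  shows "restrict (mat_vec R M J w) I \<in> I \<rightarrow>\<^sub>E carrier R"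
  using assms by (auto intro!: mat_vec_closed)

end

context field
begin

lemma card_le_if_mat_vec_kernel_trivial:
  assumes fin: "finite (carrier R)" "finite J"
    and M: "\<And>i j. i \<in> I \<Longrightarrow> j \<in> J \<Longrightarrow> M i j \<in> carrier R"
    and ker: "\<And>w. w \<in> J \<rightarrow> carrier R \<Longrightarrow> \<forall>i\<in>I. mat_vec R M J w i = \<zero> \<Longrightarrow> \<forall>j\<in>J. w j = \<zero>"
    and finI: "finite I"
  shows "card J \<le> card I"
proof -
  have "card (J \<rightarrow>\<^sub>E carrier R) \<le> card (I \<rightarrow>\<^sub>E carrier R)"
    using fin finI M by (intro card_inj_on_le[OF mat_vec_inj_on_if_kernel_trivial[OF M ker]])
      (auto intro!: mat_vec_restrict_in_PiE finite_PiE)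
  then have "card (carrier R) ^ card J \<le> card (carrier R) ^ card I"
    using fin finI by (simp add: card_PiE)
  moreover have "card {\<zero>, \<one>} \<le> card (carrier R)"
    using fin by (intro card_mono) auto
  then have "1 < card (carrier R)" by simp
  ultimately show ?thesis by (rule power_le_imp_le_exp[rotated])
qed

lemma mat_vec_surj_if_kernel_trivial:
  assumes fin: "finite (carrier R)" "finite I" "finite J" "card I = card J"
    and M: "\<And>i j. i \<in> I \<Longrightarrow> j \<in> J \<Longrightarrow> M i j \<in> carrier R"
    and ker: "\<And>w. w \<in> J \<rightarrow> carrier R \<Longrightarrow> \<forall>i\<in>I. mat_vec R M J w i = \<zero> \<Longrightarrow> \<forall>j\<in>J. w j = \<zero>"
    and u: "u \<in> I \<rightarrow> carrier R"
  shows "\<exists>w\<in>J \<rightarrow>\<^sub>E carrier R. \<forall>i\<in>I. mat_vec R M J w i = u i"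
proof -
  let ?f = "\<lambda>w. restrict (mat_vec R M J w) I"
  have sub: "?f ` (J \<rightarrow>\<^sub>E carrier R) \<subseteq> I \<rightarrow>\<^sub>E carrier R"
    using M by (auto intro!: mat_vec_restrict_in_PiE)
  have "card (?f ` (J \<rightarrow>\<^sub>E carrier R)) = card (I \<rightarrow>\<^sub>E carrier R)"
    using fin by (simp add: card_image[OF mat_vec_inj_on_if_kernel_trivial[OF M ker]] card_PiE)
  then have "?f ` (J \<rightarrow>\<^sub>E carrier R) = I \<rightarrow>\<^sub>E carrier R"
    using sub fin by (intro card_subset_eq) (auto intro: finite_PiE)
  moreover have "restrict u I \<in> I \<rightarrow>\<^sub>E carrier R" using u by auto
  ultimately have "restrict u I \<in> ?f ` (J \<rightarrow>\<^sub>E carrier R)" by simp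
  then obtain w where w: "w \<in> J \<rightarrow>\<^sub>E carrier R" and eq: "restrict u I = ?f w" ..
  have "mat_vec R M J w i = u i" if "i \<in> I" for i
    using fun_cong[OF eq, of i] that by simp
  then show ?thesis using w by blast
qed

end

section \<open>Singular members of a matrix pencil\<close>

context field
begin

lemma pencil_shifted_combination_in_kernel:
  assumes finJ: "finite J" and finP: "finite P"
    and M: "\<And>j. j \<in> J \<Longrightarrow> M i j \<in> carrier R" and E: "\<And>j. j \<in> J \<Longrightarrow> E i j \<in> carrier R"
    and P: "P \<subseteq> carrier R - {\<zero>}" and W: "\<And>\<rho>. \<rho> \<in> P \<Longrightarrow> W \<rho> \<in> J \<rightarrow> carrier R"
    and ker: "\<And>\<rho>. \<rho> \<in> P \<Longrightarrow> mat_vec R (\<lambda>i j. M i j \<oplus> \<rho> \<otimes> E i j) J (W \<rho>) i = \<zero>"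
    and c: "c \<in> P \<rightarrow> carrier R" and comb: "\<forall>j\<in>J. (\<Oplus>\<rho>\<in>P. c \<rho> \<otimes> W \<rho> j) = \<zero>"
    and \<mu>: "\<mu> \<in> carrier R"
  shows "mat_vec R M J (\<lambda>j. \<Oplus>\<rho>\<in>P. (c \<rho> \<otimes> (inv \<rho> \<ominus> \<mu>)) \<otimes> W \<rho> j) i = \<zero>"
proof -
  have \<rho>: "\<rho> \<in> carrier R" "inv \<rho> \<in> carrier R" "inv \<rho> \<otimes> \<rho> = \<one>" if "\<rho> \<in> P" for \<rho>
  proof -
    have "\<rho> \<in> Units R" using that P field_Units by auto
    then show "\<rho> \<in> carrier R" "inv \<rho> \<in> carrier R" "inv \<rho> \<otimes> \<rho> = \<one>" by auto
  qed
  have Wc: "W \<rho> j \<in> carrier R" if "\<rho> \<in> P" "j \<in> J" for \<rho> j using W that by auto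
  let ?m = "\<lambda>\<rho>. mat_vec R M J (W \<rho>) i" and ?e = "\<lambda>\<rho>. mat_vec R E J (W \<rho>) i"
  have me: "?m \<rho> \<in> carrier R" "?e \<rho> \<in> carrier R" if "\<rho> \<in> P" for \<rho>
    using that M E Wc by (auto intro!: mat_vec_closed)
  have cc: "c \<rho> \<in> carrier R" if "\<rho> \<in> P" for \<rho> using c that by auto
  have eigen: "inv \<rho> \<otimes> ?m \<rho> = \<ominus> ?e \<rho>" if "\<rho> \<in> P" for \<rho>
  proof -
    have "?m \<rho> \<oplus> \<rho> \<otimes> ?e \<rho> = \<zero>"
      using ker[OF that] M E Wc[OF that] \<rho>[OF that] by (simp add: mat_vec_pencil)
    then have "inv \<rho> \<otimes> (?m \<rho> \<oplus> \<rho> \<otimes> ?e \<rho>) = \<zero>" using \<rho>[OF that] by simp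
    then have "inv \<rho> \<otimes> ?m \<rho> \<oplus> ?e \<rho> = \<zero>"
      using me[OF that] \<rho>[OF that] by (simp add: r_distr flip: m_assoc)
    then show ?thesis using me[OF that] \<rho>[OF that] by (intro add.inv_equality[symmetric]) auto
  qed
  have sum_M: "(\<Oplus>\<rho>\<in>P. c \<rho> \<otimes> ?m \<rho>) = \<zero>" and sum_E: "(\<Oplus>\<rho>\<in>P. c \<rho> \<otimes> ?e \<rho>) = \<zero>"
    using comb M E Wc cc finJ finP
    by (simp_all add: mat_vec_zero flip: mat_vec_finsum)
  have "mat_vec R M J (\<lambda>j. \<Oplus>\<rho>\<in>P. (c \<rho> \<otimes> (inv \<rho> \<ominus> \<mu>)) \<otimes> W \<rho> j) i =
      (\<Oplus>\<rho>\<in>P. (c \<rho> \<otimes> (inv \<rho> \<ominus> \<mu>)) \<otimes> ?m \<rho>)"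
    using finJ finP M Wc cc \<rho> \<mu> by (intro mat_vec_finsum) auto
  also have "\<dots> = (\<Oplus>\<rho>\<in>P. (\<ominus>\<one>) \<otimes> (c \<rho> \<otimes> ?e \<rho>) \<oplus> (\<ominus> \<mu>) \<otimes> (c \<rho> \<otimes> ?m \<rho>))"
  proof (intro finsum_cong')
    fix \<rho> assume "\<rho> \<in> P"
    then show "(c \<rho> \<otimes> (inv \<rho> \<ominus> \<mu>)) \<otimes> ?m \<rho> = (\<ominus>\<one>) \<otimes> (c \<rho> \<otimes> ?e \<rho>) \<oplus> (\<ominus> \<mu>) \<otimes> (c \<rho> \<otimes> ?m \<rho>)"
      using eigen[of \<rho>] me[of \<rho>] cc[of \<rho>] \<rho>[of \<rho>] \<mu>
      by (simp add: minus_eq l_distr r_distr m_assoc m_lcomm l_minus r_minus add.inv_inv)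
  qed (use me cc \<mu> in auto)
  also have "\<dots> = (\<ominus>\<one>) \<otimes> (\<Oplus>\<rho>\<in>P. c \<rho> \<otimes> ?e \<rho>) \<oplus> (\<ominus> \<mu>) \<otimes> (\<Oplus>\<rho>\<in>P. c \<rho> \<otimes> ?m \<rho>)"
    using finP me cc \<mu> by (simp add: finsum_addf finsum_rdistr Pi_def)
  finally show ?thesis using sum_M sum_E \<mu> by simp
qed

lemma pencil_shifted_combination_eq_zero:
  assumes finJ: "finite J" and finP: "finite P"
    and M: "\<And>i j. i \<in> I \<Longrightarrow> j \<in> J \<Longrightarrow> M i j \<in> carrier R"
    and E: "\<And>i j. i \<in> I \<Longrightarrow> j \<in> J \<Longrightarrow> E i j \<in> carrier R"
    and M_ker: "\<And>w. w \<in> J \<rightarrow> carrier R \<Longrightarrow> \<forall>i\<in>I. mat_vec R M J w i = \<zero> \<Longrightarrow> \<forall>j\<in>J. w j = \<zero>"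
    and P: "P \<subseteq> carrier R - {\<zero>}" and W: "\<And>\<rho>. \<rho> \<in> P \<Longrightarrow> W \<rho> \<in> J \<rightarrow> carrier R"
    and ker: "\<And>\<rho> i. \<rho> \<in> P \<Longrightarrow> i \<in> I \<Longrightarrow> mat_vec R (\<lambda>i j. M i j \<oplus> \<rho> \<otimes> E i j) J (W \<rho>) i = \<zero>"
    and c: "c \<in> P \<rightarrow> carrier R" and comb: "\<forall>j\<in>J. (\<Oplus>\<rho>\<in>P. c \<rho> \<otimes> W \<rho> j) = \<zero>"
    and \<mu>: "\<mu> \<in> carrier R"
  shows "\<forall>j\<in>J. (\<Oplus>\<rho>\<in>P. (c \<rho> \<otimes> (inv \<rho> \<ominus> \<mu>)) \<otimes> W \<rho> j) = \<zero>"
proof (rule M_ker)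
  have "inv \<rho> \<in> carrier R" if "\<rho> \<in> P" for \<rho> using that P field_Units by auto
  then show "(\<lambda>j. \<Oplus>\<rho>\<in>P. (c \<rho> \<otimes> (inv \<rho> \<ominus> \<mu>)) \<otimes> W \<rho> j) \<in> J \<rightarrow> carrier R"
    using c W \<mu> by (auto intro!: finsum_closed simp: Pi_iff)
  show "\<forall>i\<in>I. mat_vec R M J (\<lambda>j. \<Oplus>\<rho>\<in>P. (c \<rho> \<otimes> (inv \<rho> \<ominus> \<mu>)) \<otimes> W \<rho> j) i = \<zero>"
  proof
    fix i assume i: "i \<in> I"
    show "mat_vec R M J (\<lambda>j. \<Oplus>\<rho>\<in>P. (c \<rho> \<otimes> (inv \<rho> \<ominus> \<mu>)) \<otimes> W \<rho> j) i = \<zero>"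
      by (rule pencil_shifted_combination_in_kernel[OF finJ finP M[OF i] E[OF i] P W ker[OF _ i] c comb \<mu>])
  qed
qed

lemma pencil_kernel_vectors_independent:
  assumes finJ: "finite J" and finP: "finite P"
    and M: "\<And>i j. i \<in> I \<Longrightarrow> j \<in> J \<Longrightarrow> M i j \<in> carrier R"
    and E: "\<And>i j. i \<in> I \<Longrightarrow> j \<in> J \<Longrightarrow> E i j \<in> carrier R"
    and M_ker: "\<And>w. w \<in> J \<rightarrow> carrier R \<Longrightarrow> \<forall>i\<in>I. mat_vec R M J w i = \<zero> \<Longrightarrow> \<forall>j\<in>J. w j = \<zero>"
    and P: "P \<subseteq> carrier R - {\<zero>}" and W: "\<And>\<rho>. \<rho> \<in> P \<Longrightarrow> W \<rho> \<in> J \<rightarrow> carrier R"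
    and W_nonzero: "\<And>\<rho>. \<rho> \<in> P \<Longrightarrow> \<exists>j\<in>J. W \<rho> j \<noteq> \<zero>"
    and ker: "\<And>\<rho> i. \<rho> \<in> P \<Longrightarrow> i \<in> I \<Longrightarrow> mat_vec R (\<lambda>i j. M i j \<oplus> \<rho> \<otimes> E i j) J (W \<rho>) i = \<zero>"
  shows "c \<in> P \<rightarrow> carrier R \<Longrightarrow> \<forall>j\<in>J. (\<Oplus>\<rho>\<in>P. c \<rho> \<otimes> W \<rho> j) = \<zero> \<Longrightarrow> \<forall>\<rho>\<in>P. c \<rho> = \<zero>"
  using finP P W W_nonzero ker
proof (induction P arbitrary: c rule: finite_induct)
  case (insert p P)
  let ?P1 = "insert p P"
  have p: "p \<in> carrier R" "p \<noteq> \<zero>" and ip: "inv p \<in> carrier R"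
    using insert.prems(3) field_Units by auto
  have Wc: "W \<rho> j \<in> carrier R" if "\<rho> \<in> ?P1" "j \<in> J" for \<rho> j
    using insert.prems(4) that by auto
  have cc: "c \<rho> \<in> carrier R" if "\<rho> \<in> ?P1" for \<rho> using insert.prems(1) that by auto
  have ic: "inv \<rho> \<in> carrier R" if "\<rho> \<in> ?P1" for \<rho>
    using that insert.prems(3) field_Units by auto
  define c' where "c' \<rho> = c \<rho> \<otimes> (inv \<rho> \<ominus> inv p)" for \<rho>
  have c'c: "c' \<rho> \<in> carrier R" if "\<rho> \<in> ?P1" for \<rho>
    unfolding c'_def using cc[OF that] ic[OF that] ip by simp
  \<comment> \<open>Shifting by \<open>p\<inverse>\<close> kills the coefficient of \<open>W p\<close>.\<close>
  have "\<forall>j\<in>J. (\<Oplus>\<rho>\<in>?P1. c' \<rho> \<otimes> W \<rho> j) = \<zero>"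
    unfolding c'_def
    by (rule pencil_shifted_combination_eq_zero[OF finJ _ M E M_ker insert.prems(3,4,6,1,2) ip])
      (use insert.hyps in simp)
  moreover have "c' p = \<zero>" unfolding c'_def using ip cc[of p] by (simp add: minus_eq r_neg)
  ultimately have "\<forall>j\<in>J. (\<Oplus>\<rho>\<in>P. c' \<rho> \<otimes> W \<rho> j) = \<zero>"
    using insert.hyps Wc c'c by (simp add: finsum_insert Pi_def finsum_closed)
  then have "\<forall>\<rho>\<in>P. c' \<rho> = \<zero>"
    using insert.prems c'c by (intro insert.IH) auto
  then have c_P: "c \<rho> = \<zero>" if "\<rho> \<in> P" for \<rho>
  proof -
    have "\<rho> \<noteq> p" "\<rho> \<in> carrier R" "\<rho> \<noteq> \<zero>" using that insert.hyps insert.prems(3) by auto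
    then have "inv \<rho> \<noteq> inv p"
      using p field_Units by (metis Diff_iff Units_inv_inv empty_iff insert_iff)
    then have "inv \<rho> \<ominus> inv p \<noteq> \<zero>" using ic[of \<rho>] ip that by simp
    then show ?thesis
      using \<open>\<forall>\<rho>\<in>P. c' \<rho> = \<zero>\<close> that cc[of \<rho>] ic[of \<rho>] ip integral
      unfolding c'_def by (metis insertCI minus_closed)
  qed
  obtain j where j: "j \<in> J" "W p j \<noteq> \<zero>" using insert.prems(5) by blast
  have "(\<Oplus>\<rho>\<in>P. c \<rho> \<otimes> W \<rho> j) = \<zero>"
    using Wc c_P j by (intro add.finprod_one_eqI) simp
  then have "(\<Oplus>\<rho>\<in>?P1. c \<rho> \<otimes> W \<rho> j) = c p \<otimes> W p j"
    using insert.hyps Wc cc j by (simp add: finsum_insert Pi_def finsum_closed)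
  then have "c p \<otimes> W p j = \<zero>" using insert.prems(2) j by simp
  then have "c p = \<zero>" using integral_iff[of "c p" "W p j"] cc[of p] Wc[of p j] j by simp
  then show ?case using c_P by auto
qed simp

lemma card_singular_pencil_values_le:
  assumes fin: "finite (carrier R)" "finite I" "finite J"
    and M: "\<And>i j. i \<in> I \<Longrightarrow> j \<in> J \<Longrightarrow> M i j \<in> carrier R"
    and E: "\<And>i j. i \<in> I \<Longrightarrow> j \<in> J \<Longrightarrow> E i j \<in> carrier R"
    and M_ker: "\<And>w. w \<in> J \<rightarrow> carrier R \<Longrightarrow> \<forall>i\<in>I. mat_vec R M J w i = \<zero> \<Longrightarrow> \<forall>j\<in>J. w j = \<zero>"
  shows "card {\<rho>\<in>carrier R - {\<zero>}. \<exists>w\<in>J \<rightarrow> carrier R. (\<exists>j\<in>J. w j \<noteq> \<zero>) \<and>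
            (\<forall>i\<in>I. mat_vec R (\<lambda>i j. M i j \<oplus> \<rho> \<otimes> E i j) J w i = \<zero>)} \<le> card J"
    (is "card ?B \<le> _")
proof -
  define B where "B = ?B"
  have "\<forall>\<rho>\<in>B. \<exists>w. w \<in> J \<rightarrow> carrier R \<and> (\<exists>j\<in>J. w j \<noteq> \<zero>) \<and>
      (\<forall>i\<in>I. mat_vec R (\<lambda>i j. M i j \<oplus> \<rho> \<otimes> E i j) J w i = \<zero>)"
    unfolding B_def by blast
  from bchoice[OF this] obtain W where W: "\<And>\<rho>. \<rho> \<in> B \<Longrightarrow> W \<rho> \<in> J \<rightarrow> carrier R \<and>
      (\<exists>j\<in>J. W \<rho> j \<noteq> \<zero>) \<and> (\<forall>i\<in>I. mat_vec R (\<lambda>i j. M i j \<oplus> \<rho> \<otimes> E i j) J (W \<rho>) i = \<zero>)"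
    by blast
  have B: "B \<subseteq> carrier R - {\<zero>}" unfolding B_def by blast
  have finB: "finite B" using fin(1) B finite_subset by blast
  have Wc: "W \<rho> j \<in> carrier R" if "\<rho> \<in> B" "j \<in> J" for \<rho> j using W[OF that(1)] that(2) by auto
  \<comment> \<open>The \<open>W \<rho>\<close> are independent, i.e. the columns of a matrix with trivial kernel.\<close>
  have "\<forall>\<rho>\<in>B. c \<rho> = \<zero>"
    if c: "c \<in> B \<rightarrow> carrier R" and z: "\<forall>j\<in>J. mat_vec R (\<lambda>j \<rho>. W \<rho> j) B c j = \<zero>" for c
  proof (rule pencil_kernel_vectors_independent[OF fin(3) finB M E M_ker B _ _ _ c])
    show "\<forall>j\<in>J. (\<Oplus>\<rho>\<in>B. c \<rho> \<otimes> W \<rho> j) = \<zero>"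
    proof
      fix j assume j: "j \<in> J"
      have "(\<Oplus>\<rho>\<in>B. c \<rho> \<otimes> W \<rho> j) = mat_vec R (\<lambda>j \<rho>. W \<rho> j) B c j"
        unfolding mat_vec_def using c Wc j by (intro finsum_cong') (auto intro: m_comm)
      then show "(\<Oplus>\<rho>\<in>B. c \<rho> \<otimes> W \<rho> j) = \<zero>" using z j by simp
    qed
  qed (use W in auto)
  then have "card B \<le> card J"
    using fin finB Wc by (intro card_le_if_mat_vec_kernel_trivial[of B J "\<lambda>j \<rho>. W \<rho> j"]) auto
  then show ?thesis unfolding B_def .
qed

end

section \<open>Cauchy matrices\<close>

definition cauchy_matrix :: "('f,'m) ring_scheme \<Rightarrow> ('i \<Rightarrow> 'f) \<Rightarrow> ('j \<Rightarrow> 'f) \<Rightarrow> 'i \<Rightarrow> 'j \<Rightarrow> 'f" where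
  "cauchy_matrix R a b i j = m_inv R (a_minus R (a i) (b j))"

definition kron_identity :: "('f,'m) ring_scheme \<Rightarrow> ('i \<Rightarrow> 'j \<Rightarrow> 'f) \<Rightarrow> 'i \<times> 'y \<Rightarrow> 'j \<times> 'y \<Rightarrow> 'f" where
  "kron_identity R C row col = (if snd row = snd col then C (fst row) (fst col) else zero R)"

context cring
begin

lemma mat_vec_kron_identity:
  assumes finS: "finite S" and finY: "finite Y" and x: "x \<in> Y"
    and C: "\<And>v. v \<in> S \<Longrightarrow> C i v \<in> carrier R" and w: "w \<in> S \<times> Y \<rightarrow> carrier R"
  shows "mat_vec R (kron_identity R C) (S \<times> Y) w (i, x) = mat_vec R C S (\<lambda>v. w (v, x)) i"
proof -
  let ?f = "\<lambda>col. kron_identity R C (i, x) col \<otimes> w col"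
  have fc: "?f \<in> S \<times> Y \<rightarrow> carrier R"
    using C w by (auto simp: kron_identity_def)
  have "mat_vec R (kron_identity R C) (S \<times> Y) w (i, x) = (\<Oplus>col\<in>(\<lambda>v. (v, x)) ` S. ?f col)"
    unfolding mat_vec_def
  proof (rule add.finprod_mono_neutral_cong_right)
    show "(\<lambda>v. (v, x)) ` S \<subseteq> S \<times> Y" using x by auto
    show "?f col = \<zero>" if "col \<in> S \<times> Y - (\<lambda>v. (v, x)) ` S" for col
    proof -
      have "w col \<in> carrier R" using that w by auto
      then show ?thesis using that by (cases col) (auto simp: kron_identity_def)
    qed
  qed (use finS finY fc in auto)
  also have "\<dots> = (\<Oplus>v\<in>S. ?f (v, x))"
    using fc x by (intro finsum_reindex) (auto intro: inj_onI)
  also have "\<dots> = mat_vec R C S (\<lambda>v. w (v, x)) i"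
    unfolding mat_vec_def kron_identity_def by simp
  finally show ?thesis .
qed

lemma kron_identity_kernel_trivial:
  assumes finS: "finite S" and finY: "finite Y"
    and C: "\<And>i v. i \<in> I \<Longrightarrow> v \<in> S \<Longrightarrow> C i v \<in> carrier R"
    and C_ker: "\<And>u. u \<in> S \<rightarrow> carrier R \<Longrightarrow> \<forall>i\<in>I. mat_vec R C S u i = \<zero> \<Longrightarrow> \<forall>v\<in>S. u v = \<zero>"
    and w: "w \<in> S \<times> Y \<rightarrow> carrier R"
    and z: "\<forall>row\<in>I \<times> Y. mat_vec R (kron_identity R C) (S \<times> Y) w row = \<zero>"
  shows "\<forall>col\<in>S \<times> Y. w col = \<zero>"
proof
  fix col assume "col \<in> S \<times> Y"
  then obtain v x where col: "col = (v, x)" "v \<in> S" "x \<in> Y" by auto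
  have "mat_vec R C S (\<lambda>v. w (v, x)) i = \<zero>" if "i \<in> I" for i
    using z that col(3) mat_vec_kron_identity[where C = C and i = i, OF finS finY col(3) C[OF that] w] by auto
  then have "\<forall>v\<in>S. w (v, x) = \<zero>"
    using w col(3) by (intro C_ker) auto
  then show "w col = \<zero>" using col by simp
qed

end

context field
begin

lemma inv_diff_closed:
  assumes "x \<in> carrier R" "y \<in> carrier R" "x \<noteq> y"
  shows "inv (x \<ominus> y) \<in> carrier R" "inv (x \<ominus> y) \<noteq> \<zero>" "(x \<ominus> y) \<otimes> inv (x \<ominus> y) = \<one>"
proof -
  have U: "x \<ominus> y \<in> Units R" using assms field_Units by simp
  then have "inv (x \<ominus> y) \<in> Units R" by (rule Units_inv_Units)
  then show "inv (x \<ominus> y) \<in> carrier R" "inv (x \<ominus> y) \<noteq> \<zero>" using field_Units by auto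
  show "(x \<ominus> y) \<otimes> inv (x \<ominus> y) = \<one>" using U by (rule Units_r_inv)
qed

lemma cauchy_identity:
  assumes c: "ai \<in> carrier R" "bj \<in> carrier R" "bm \<in> carrier R" "aim \<in> carrier R" "w \<in> carrier R"
    "X \<in> carrier R" "Y \<in> carrier R"
    and h1: "(ai \<ominus> bj) \<otimes> X = \<one>" and h2: "(aim \<ominus> bj) \<otimes> Y = \<one>"
  shows "X \<otimes> (w \<otimes> (bj \<ominus> bm) \<otimes> Y) \<otimes> (aim \<ominus> ai) =
         (ai \<ominus> bm) \<otimes> (X \<otimes> w) \<ominus> (aim \<ominus> bm) \<otimes> (Y \<otimes> w)"
proof -
  have "X \<otimes> (w \<otimes> (bj \<ominus> bm) \<otimes> Y) \<otimes> (aim \<ominus> ai) =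
        w \<otimes> (bj \<ominus> bm) \<otimes> X \<otimes> ((aim \<ominus> bj) \<otimes> Y) \<ominus> w \<otimes> (bj \<ominus> bm) \<otimes> Y \<otimes> ((ai \<ominus> bj) \<otimes> X)"
    using c by algebra
  also have "\<dots> = w \<otimes> (bj \<ominus> bm) \<otimes> X \<otimes> \<one> \<ominus> w \<otimes> (bj \<ominus> bm) \<otimes> Y \<otimes> \<one>"
    by (simp only: h1 h2)
  also have "\<dots> = \<one> \<otimes> w \<oplus> (bj \<ominus> bm) \<otimes> X \<otimes> w \<ominus> (\<one> \<otimes> w \<oplus> (bj \<ominus> bm) \<otimes> Y \<otimes> w)"
    using c by algebra
  also have "\<dots> = ((ai \<ominus> bj) \<otimes> X) \<otimes> w \<oplus> (bj \<ominus> bm) \<otimes> X \<otimes> w \<ominus> (((aim \<ominus> bj) \<otimes> Y) \<otimes> w \<oplus> (bj \<ominus> bm) \<otimes> Y \<otimes> w)"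
    by (simp only: h1 h2)
  also have "\<dots> = (ai \<ominus> bm) \<otimes> (X \<otimes> w) \<ominus> (aim \<ominus> bm) \<otimes> (Y \<otimes> w)"
    using c by algebra
  finally show ?thesis .
qed

lemma cauchy_row_elimination:
  assumes finJ: "finite J" and x: "x \<in> carrier R" "x \<notin> b ` J" and x': "x' \<in> carrier R" "x' \<notin> b ` J"
    and \<beta>: "\<beta> \<in> carrier R" and b: "b ` J \<subseteq> carrier R" and w: "w \<in> J \<rightarrow> carrier R"
    and eq: "(\<Oplus>j\<in>J. inv (x \<ominus> b j) \<otimes> w j) = \<zero>" and eq': "(\<Oplus>j\<in>J. inv (x' \<ominus> b j) \<otimes> w j) = \<zero>"
  shows "(\<Oplus>j\<in>J. inv (x \<ominus> b j) \<otimes> (w j \<otimes> (b j \<ominus> \<beta>) \<otimes> inv (x' \<ominus> b j))) \<otimes> (x' \<ominus> x) = \<zero>"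
proof -
  have bc: "b j \<in> carrier R" and wc: "w j \<in> carrier R" if "j \<in> J" for j using b w that by auto
  have X: "inv (x \<ominus> b j) \<in> carrier R" "(x \<ominus> b j) \<otimes> inv (x \<ominus> b j) = \<one>"
    and X': "inv (x' \<ominus> b j) \<in> carrier R" "(x' \<ominus> b j) \<otimes> inv (x' \<ominus> b j) = \<one>" if "j \<in> J" for j
    using inv_diff_closed[OF x(1) bc[OF that]] inv_diff_closed[OF x'(1) bc[OF that]] x(2) x'(2) that
    by auto
  let ?f = "\<lambda>j. inv (x \<ominus> b j) \<otimes> w j" and ?f' = "\<lambda>j. inv (x' \<ominus> b j) \<otimes> w j"
  have f: "?f \<in> J \<rightarrow> carrier R" "?f' \<in> J \<rightarrow> carrier R" using X X' wc by auto
  have "(\<Oplus>j\<in>J. inv (x \<ominus> b j) \<otimes> (w j \<otimes> (b j \<ominus> \<beta>) \<otimes> inv (x' \<ominus> b j))) \<otimes> (x' \<ominus> x) =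
      (\<Oplus>j\<in>J. inv (x \<ominus> b j) \<otimes> (w j \<otimes> (b j \<ominus> \<beta>) \<otimes> inv (x' \<ominus> b j)) \<otimes> (x' \<ominus> x))"
    by (rule finsum_ldistr[OF finJ]) (use x x' \<beta> bc wc X X' in auto)
  also have "\<dots> = (\<Oplus>j\<in>J. (x \<ominus> \<beta>) \<otimes> ?f j \<ominus> (x' \<ominus> \<beta>) \<otimes> ?f' j)"
  proof (rule finsum_cong')
    fix j assume j: "j \<in> J"
    show "inv (x \<ominus> b j) \<otimes> (w j \<otimes> (b j \<ominus> \<beta>) \<otimes> inv (x' \<ominus> b j)) \<otimes> (x' \<ominus> x) =
        (x \<ominus> \<beta>) \<otimes> ?f j \<ominus> (x' \<ominus> \<beta>) \<otimes> ?f' j"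
      by (rule cauchy_identity[OF x(1) bc[OF j] \<beta> x'(1) wc[OF j] X(1)[OF j] X'(1)[OF j] X(2)[OF j] X'(2)[OF j]])
  qed (use x x' \<beta> X X' wc in auto)
  also have "\<dots> = (x \<ominus> \<beta>) \<otimes> (\<Oplus>j\<in>J. ?f j) \<ominus> (x' \<ominus> \<beta>) \<otimes> (\<Oplus>j\<in>J. ?f' j)"
  proof -
    have c: "x \<ominus> \<beta> \<in> carrier R" "x' \<ominus> \<beta> \<in> carrier R" using x x' \<beta> by auto
    show ?thesis
      unfolding finsum_rdistr[OF finJ c(1) f(1)] finsum_rdistr[OF finJ c(2) f(2)]
      by (rule finsum_diff) (use c f in auto)
  qed
  finally show ?thesis using eq eq' x x' \<beta> by (simp add: minus_eq)
qed

text \<open>Eliminating between the equations with poles \<open>x\<close> and \<open>x'\<close> leaves a Cauchy system in the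
  unknowns \<open>w j (b j - b m) / (x' - b j)\<close>, whose \<open>m\<close>-th unknown vanishes.\<close>
lemma cauchy_reduced_system:
  assumes J: "finite J" "m \<notin> J" and x: "x \<in> carrier R" "x \<notin> b ` insert m J"
    and x': "x' \<in> carrier R" "x' \<notin> b ` insert m J" and ne: "x \<noteq> x'"
    and b: "b ` insert m J \<subseteq> carrier R" and w: "w \<in> insert m J \<rightarrow> carrier R"
    and eq: "(\<Oplus>j\<in>insert m J. inv (x \<ominus> b j) \<otimes> w j) = \<zero>"
    and eq': "(\<Oplus>j\<in>insert m J. inv (x' \<ominus> b j) \<otimes> w j) = \<zero>"
  shows "(\<Oplus>j\<in>J. inv (x \<ominus> b j) \<otimes> (w j \<otimes> (b j \<ominus> b m) \<otimes> inv (x' \<ominus> b j))) = \<zero>"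
proof -
  let ?u = "\<lambda>j. w j \<otimes> (b j \<ominus> b m) \<otimes> inv (x' \<ominus> b j)"
  have bc: "b j \<in> carrier R" if "j \<in> insert m J" for j using b that by auto
  have X: "inv (x \<ominus> b j) \<in> carrier R" "inv (x' \<ominus> b j) \<in> carrier R" if "j \<in> insert m J" for j
    using inv_diff_closed[OF x(1) bc[OF that]] inv_diff_closed[OF x'(1) bc[OF that]] x(2) x'(2) that
    by auto
  have summands: "(\<lambda>j. inv (x \<ominus> b j) \<otimes> ?u j) \<in> insert m J \<rightarrow> carrier R"
    using X bc w by (auto simp: Pi_iff)
  have prod: "(\<Oplus>j\<in>insert m J. inv (x \<ominus> b j) \<otimes> ?u j) \<otimes> (x' \<ominus> x) = \<zero>"
    by (rule cauchy_row_elimination[OF _ x x' bc[OF insertI1] b w eq eq']) (use J in simp)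
  have "x' \<ominus> x \<noteq> \<zero>" "x' \<ominus> x \<in> carrier R" using x(1) x'(1) ne by simp_all
  then have "(\<Oplus>j\<in>insert m J. inv (x \<ominus> b j) \<otimes> ?u j) = \<zero>"
    using integral[OF prod finsum_closed[OF summands]] by simp
  moreover have "?u m = \<zero>" using w bc X by (simp add: minus_eq r_neg)
  ultimately show ?thesis using J summands X(1)[OF insertI1] by (simp add: finsum_insert)
qed

lemma cauchy_back_substitution:
  assumes J: "finite J" "m \<notin> J" and x: "x \<in> carrier R" "x \<notin> b ` insert m J"
    and b: "b ` insert m J \<subseteq> carrier R" "inj_on b (insert m J)" and w: "w \<in> insert m J \<rightarrow> carrier R"
    and eq: "(\<Oplus>j\<in>insert m J. inv (x \<ominus> b j) \<otimes> w j) = \<zero>"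
    and reduced: "\<forall>j\<in>J. w j \<otimes> (b j \<ominus> b m) \<otimes> inv (x \<ominus> b j) = \<zero>"
  shows "\<forall>j\<in>insert m J. w j = \<zero>"
proof -
  have bc: "b j \<in> carrier R" and wc: "w j \<in> carrier R" if "j \<in> insert m J" for j
    using b w that by auto
  have X: "inv (x \<ominus> b j) \<in> carrier R" "inv (x \<ominus> b j) \<noteq> \<zero>" if "j \<in> insert m J" for j
    using inv_diff_closed[OF x(1) bc[OF that]] x(2) that by auto
  have wJ: "w j = \<zero>" if j: "j \<in> J" for j
  proof -
    have "b j \<noteq> b m" using j J(2) inj_onD[OF b(2), of j m] by auto
    then have "b j \<ominus> b m \<noteq> \<zero>" using bc j by simp
    moreover have "w j \<otimes> (b j \<ominus> b m) \<otimes> inv (x \<ominus> b j) = \<zero>" using reduced j by blast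
    ultimately show ?thesis
      using j wc[of j] bc[of j] bc[of m] X[of j] by (simp add: integral_iff)
  qed
  have "(\<Oplus>j\<in>J. inv (x \<ominus> b j) \<otimes> w j) = \<zero>"
    using wJ X by (intro add.finprod_one_eqI) simp
  then have "inv (x \<ominus> b m) \<otimes> w m = \<zero>"
    using eq J X wc by (simp add: finsum_insert Pi_def)
  then have "w m = \<zero>" using integral[of "inv (x \<ominus> b m)" "w m"] X[of m] wc[of m] by simp
  then show ?thesis using wJ by blast
qed

lemma cauchy_kernel_trivial:
  assumes "finite J" and "finite I" "card I = card J" "a ` I \<subseteq> carrier R" "b ` J \<subseteq> carrier R"
    "inj_on a I" "inj_on b J" "a ` I \<inter> b ` J = {}" "w \<in> J \<rightarrow> carrier R"
    "\<forall>i\<in>I. mat_vec R (cauchy_matrix R a b) J w i = \<zero>"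
  shows "\<forall>j\<in>J. w j = \<zero>"
  using assms unfolding mat_vec_def cauchy_matrix_def
proof (induction J arbitrary: I w rule: finite_induct)
  case (insert m J)
  let ?J1 = "insert m J"
  note hyps = insert.hyps and prems = insert.prems
  obtain im where im: "im \<in> I" using prems(2) hyps by fastforce
  define I' where "I' = I - {im}"
  have ac: "a i \<in> carrier R" if "i \<in> I" for i using prems that by auto
  have bc: "b j \<in> carrier R" if "j \<in> ?J1" for j using prems that by auto
  have wc: "w j \<in> carrier R" if "j \<in> ?J1" for j using prems(8) that by auto
  have ab: "a i \<notin> b ` ?J1" if "i \<in> I" for i using prems(7) that by blast
  have eq: "(\<Oplus>j\<in>?J1. inv (a i \<ominus> b j) \<otimes> w j) = \<zero>" if "i \<in> I" for i
    using prems(9) that by blast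
  define u where "u j = w j \<otimes> (b j \<ominus> b m) \<otimes> inv (a im \<ominus> b j)" for j
  have uc: "u j \<in> carrier R" if "j \<in> ?J1" for j
    using inv_diff_closed(1)[OF ac[OF im] bc[OF that]] ab[OF im] that wc[OF that] bc[OF that] bc[of m]
    unfolding u_def by auto
  have "\<forall>i\<in>I'. (\<Oplus>j\<in>J. inv (a i \<ominus> b j) \<otimes> u j) = \<zero>"
  proof
    fix i assume i: "i \<in> I'"
    have iI: "i \<in> I" using i unfolding I'_def by simp
    have ne: "a i \<noteq> a im" using i im prems(5) unfolding I'_def inj_on_def by blast
    show "(\<Oplus>j\<in>J. inv (a i \<ominus> b j) \<otimes> u j) = \<zero>"
      unfolding u_def
      by (rule cauchy_reduced_system[OF hyps ac[OF iI] ab[OF iI] ac[OF im] ab[OF im] ne prems(4,8)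
            eq[OF iI] eq[OF im]])
  qed
  then have "\<forall>j\<in>J. u j = \<zero>"
  proof (intro insert.IH[of I' u])
    show "finite I'" "card I' = card J"
      using prems(1,2) hyps im unfolding I'_def by auto
    show "a ` I' \<subseteq> carrier R" "b ` J \<subseteq> carrier R" "inj_on a I'" "inj_on b J" "a ` I' \<inter> b ` J = {}"
      using prems(3-7) unfolding I'_def by (auto intro: inj_on_subset)
    show "u \<in> J \<rightarrow> carrier R" using uc by simp
  qed
  then show ?case
    unfolding u_def by (rule cauchy_back_substitution[OF hyps ac[OF im] ab[OF im] prems(4,6,8) eq[OF im]])
qed simp

end


section \<open>Parity-check characterization of MDS vector codes\<close>

locale parity_check_mds = field R for R :: "('f, 'm) ring_scheme" (structure) +
  fixes V :: "'v set" and Y :: "'y set" and Rw :: "'r set" and H :: "'r \<Rightarrow> 'v \<times> 'y \<Rightarrow> 'f"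
    and n k :: nat and C :: "('v \<times> 'y \<Rightarrow> 'f) set"
  assumes finite_carrier: "finite (carrier R)" and finite_V: "finite V" and finite_Y: "finite Y"
    and Y_nonempty: "Y \<noteq> {}" and finite_Rw: "finite Rw" and card_V: "card V = n"
    and k_pos: "1 \<le> k" and k_le_n: "k \<le> n" and card_Rw: "card Rw = (n - k) * card Y"
    and H_closed: "\<And>row col. row \<in> Rw \<Longrightarrow> col \<in> V \<times> Y \<Longrightarrow> H row col \<in> carrier R"
    and blocks_independent: "\<And>S w. S \<subseteq> V \<Longrightarrow> card S = n - k \<Longrightarrow> w \<in> S \<times> Y \<rightarrow> carrier R \<Longrightarrow>
        \<forall>row\<in>Rw. mat_vec R H (S \<times> Y) w row = \<zero> \<Longrightarrow> \<forall>col\<in>S \<times> Y. w col = \<zero>"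
    and code_eq: "C = {c \<in> V \<times> Y \<rightarrow>\<^sub>E carrier R. \<forall>row\<in>Rw. mat_vec R H (V \<times> Y) c row = \<zero>}"
begin

definition zero_word :: "'v \<times> 'y \<Rightarrow> 'f" where
  "zero_word = (\<lambda>i\<in>V \<times> Y. \<zero>)"

definition block_support :: "('v \<times> 'y \<Rightarrow> 'f) \<Rightarrow> 'v set" where
  "block_support c = {v\<in>V. \<exists>y\<in>Y. c (v, y) \<noteq> \<zero>}"

lemma finite_VY: "finite (V \<times> Y)"
  using finite_V finite_Y by simp

lemma in_code_iff: "c \<in> C \<longleftrightarrow> c \<in> V \<times> Y \<rightarrow>\<^sub>E carrier R \<and> (\<forall>row\<in>Rw. mat_vec R H (V \<times> Y) c row = \<zero>)"
  using code_eq by simp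

lemma code_closed: "c \<in> C \<Longrightarrow> i \<in> V \<times> Y \<Longrightarrow> c i \<in> carrier R"
  unfolding in_code_iff by (auto simp: PiE_iff)

lemma zero_word_in_code: "zero_word \<in> C"
  unfolding in_code_iff zero_word_def using H_closed by (auto intro!: mat_vec_zero)

lemma lincomb_in_code:
  assumes "u \<in> C" "w \<in> C" "l \<in> carrier R"
  shows "(\<lambda>i\<in>V \<times> Y. u i \<oplus> l \<otimes> w i) \<in> C"
  unfolding in_code_iff
proof (intro conjI ballI)
  show "(\<lambda>i\<in>V \<times> Y. u i \<oplus> l \<otimes> w i) \<in> V \<times> Y \<rightarrow>\<^sub>E carrier R" using code_closed assms by auto
  fix row assume r: "row \<in> Rw"
  have "mat_vec R H (V \<times> Y) (\<lambda>i\<in>V \<times> Y. u i \<oplus> l \<otimes> w i) row = mat_vec R H (V \<times> Y) (\<lambda>i. u i \<oplus> l \<otimes> w i) row"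
    using r H_closed code_closed assms by (intro mat_vec_cong) auto
  also have "\<dots> = mat_vec R H (V \<times> Y) u row \<oplus> l \<otimes> mat_vec R H (V \<times> Y) w row"
    using r H_closed code_closed assms by (intro mat_vec_lincomb) auto
  also have "\<dots> = \<zero>" using assms r unfolding in_code_iff by simp
  finally show "mat_vec R H (V \<times> Y) (\<lambda>i\<in>V \<times> Y. u i \<oplus> l \<otimes> w i) row = \<zero>" .
qed

lemma diff_in_code:
  assumes "u \<in> C" "w \<in> C"
  shows "(\<lambda>i\<in>V \<times> Y. u i \<ominus> w i) \<in> C"
proof -
  have "(\<lambda>i\<in>V \<times> Y. u i \<oplus> (\<ominus>\<one>) \<otimes> w i) = (\<lambda>i\<in>V \<times> Y. u i \<ominus> w i)"
    using assms code_closed by (intro restrict_ext) (simp add: minus_eq l_minus)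
  then show ?thesis using lincomb_in_code[OF assms, of "\<ominus>\<one>"] by simp
qed

lemma lin_subspace_code: "lin_subspace R (V \<times> Y) C"
proof -
  have "(\<lambda>i\<in>V \<times> Y. u i \<oplus> w i) \<in> C" if "u \<in> C" "w \<in> C" for u w
    using lincomb_in_code[OF that one_closed] code_closed[OF that(2)]
    by (metis (no_types, lifting) l_one restrict_ext)
  moreover have "(\<lambda>i\<in>V \<times> Y. l \<otimes> u i) \<in> C" if "l \<in> carrier R" "u \<in> C" for l u
    using lincomb_in_code[OF zero_word_in_code that(2,1)] code_closed[OF that(2)] that(1)
    by (simp add: zero_word_def cong: restrict_cong)
  ultimately show ?thesis
    unfolding lin_subspace_def using code_eq zero_word_in_code unfolding zero_word_def by auto
qed

lemma eq_zero_word_if_small_support: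
  assumes c: "c \<in> C" and small: "card (block_support c) \<le> n - k"
  shows "c = zero_word"
proof -
  have supp_V: "block_support c \<subseteq> V" unfolding block_support_def by auto
  then have "card (V - block_support c) = n - card (block_support c)"
    using finite_V card_V by (simp add: card_Diff_subset finite_subset)
  then have "n - k - card (block_support c) \<le> card (V - block_support c)" by simp
  then obtain T where T: "T \<subseteq> V - block_support c" "card T = n - k - card (block_support c)"
    by (meson obtain_subset_with_card_n)
  define S where "S = block_support c \<union> T"
  have SV: "S \<subseteq> V" unfolding S_def using supp_V T by auto
  have "card S = n - k"
    using T small supp_V finite_V unfolding S_def
    by (subst card_Un_disjoint) (auto intro: finite_subset)
  moreover have zero_out: "c (v, y) = \<zero>" if "v \<in> V" "y \<in> Y" "v \<notin> S" for v y
    using that unfolding S_def block_support_def by auto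
  moreover have "mat_vec R H (S \<times> Y) c row = \<zero>" if r: "row \<in> Rw" for row
  proof -
    have "mat_vec R H (S \<times> Y) c row = mat_vec R H (V \<times> Y) c row"
      by (intro mat_vec_mono_neutral) (use SV H_closed r code_closed[OF c] zero_out finite_VY in blast)+
    then show ?thesis using c r unfolding in_code_iff by simp
  qed
  ultimately have "\<forall>col\<in>S \<times> Y. c col = \<zero>"
    using SV code_closed[OF c] by (intro blocks_independent) auto
  then have "\<forall>i\<in>V \<times> Y. c i = \<zero>" using zero_out by auto
  then show ?thesis
    using c unfolding in_code_iff zero_word_def by (auto simp: PiE_iff intro: extensionalityI[of _ "V \<times> Y"])
qed

lemma hamming_eq_card_block_support:
  assumes "c \<in> C" "c' \<in> C"
  shows "hamming V Y c c' = card (block_support (\<lambda>i\<in>V \<times> Y. c i \<ominus> c' i))"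
proof -
  have "(\<lambda>y\<in>Y. c (v, y)) \<noteq> (\<lambda>y\<in>Y. c' (v, y)) \<longleftrightarrow> (\<exists>y\<in>Y. c (v, y) \<ominus> c' (v, y) \<noteq> \<zero>)"
    if "v \<in> V" for v
    using that code_closed[OF assms(1)] code_closed[OF assms(2)] by (auto simp: fun_eq_iff restrict_def)
  then show ?thesis unfolding hamming_def block_support_def by (auto intro!: arg_cong[where f = card])
qed

lemma eq_if_diff_eq_zero_word:
  assumes "c \<in> C" "c' \<in> C" "(\<lambda>i\<in>V \<times> Y. c i \<ominus> c' i) = zero_word"
  shows "c = c'"
proof (rule PiE_ext)
  show "c \<in> V \<times> Y \<rightarrow>\<^sub>E carrier R" "c' \<in> V \<times> Y \<rightarrow>\<^sub>E carrier R" using assms unfolding in_code_iff by auto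
  fix i assume i: "i \<in> V \<times> Y"
  then have "c i \<ominus> c' i = \<zero>" using fun_cong[OF assms(3), of i] unfolding zero_word_def by simp
  then show "c i = c' i" using code_closed[OF assms(1) i] code_closed[OF assms(2) i] by simp
qed

lemma min_distance:
  assumes "c \<in> C" "c' \<in> C" "c \<noteq> c'"
  shows "n - k + 1 \<le> hamming V Y c c'"
proof (rule ccontr)
  assume "\<not> ?thesis"
  then have "card (block_support (\<lambda>i\<in>V \<times> Y. c i \<ominus> c' i)) \<le> n - k"
    using hamming_eq_card_block_support[OF assms(1,2)] by simp
  then have "(\<lambda>i\<in>V \<times> Y. c i \<ominus> c' i) = zero_word"
    using eq_zero_word_if_small_support diff_in_code assms by blast
  then show False using eq_if_diff_eq_zero_word assms by blast
qed

context
  fixes T :: "'v set"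
  assumes T: "T \<subseteq> V" "card T = k"
begin

lemma card_complement: "card (V - T) = n - k"
  using T finite_V card_V by (simp add: card_Diff_subset finite_subset)

lemma complement_blocks_surj:
  assumes "u' \<in> Rw \<rightarrow> carrier R"
  shows "\<exists>w\<in>(V - T) \<times> Y \<rightarrow>\<^sub>E carrier R. \<forall>row\<in>Rw. mat_vec R H ((V - T) \<times> Y) w row = u' row"
proof (rule mat_vec_surj_if_kernel_trivial[OF finite_carrier finite_Rw _ _ _ _ assms])
  show "finite ((V - T) \<times> Y)" using finite_V finite_Y by simp
  show "card Rw = card ((V - T) \<times> Y)"
    using card_Rw card_complement finite_Y by (simp add: card_cartesian_product)
  show "H row col \<in> carrier R" if "row \<in> Rw" "col \<in> (V - T) \<times> Y" for row col
    using H_closed that by auto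
qed (rule blocks_independent[OF Diff_subset card_complement])

lemma extends_from_information_set:
  assumes u: "u \<in> T \<times> Y \<rightarrow> carrier R"
  shows "\<exists>c\<in>C. \<forall>i\<in>T \<times> Y. c i = u i"
proof -
  let ?S = "V - T"
  have finTY: "finite (T \<times> Y)" and finSY: "finite (?S \<times> Y)"
    using T finite_V finite_Y by (auto intro: finite_subset)
  have HT: "H row col \<in> carrier R" if "row \<in> Rw" "col \<in> T \<times> Y" for row col
    using H_closed that T by auto
  have HS: "H row col \<in> carrier R" if "row \<in> Rw" "col \<in> ?S \<times> Y" for row col
    using H_closed that by auto
  define u' where "u' row = \<ominus> mat_vec R H (T \<times> Y) u row" for row
  have u'_closed: "u' \<in> Rw \<rightarrow> carrier R"
    unfolding u'_def using HT u by (auto intro!: mat_vec_closed)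
  from complement_blocks_surj[OF u'_closed]
  obtain w where w: "w \<in> ?S \<times> Y \<rightarrow>\<^sub>E carrier R" "\<forall>row\<in>Rw. mat_vec R H (?S \<times> Y) w row = u' row"
    by (rule bexE)
  define c where "c = (\<lambda>i\<in>V \<times> Y. if fst i \<in> T then u i else w i)"
  have c_closed: "c \<in> V \<times> Y \<rightarrow>\<^sub>E carrier R"
    unfolding c_def using u w(1) by (auto simp: PiE_iff)
  have c_on_S: "c j = w j" if "j \<in> ?S \<times> Y" for j
    using that unfolding c_def by auto
  have "mat_vec R H (V \<times> Y) c row = \<zero>" if r: "row \<in> Rw" for row
  proof -
    have VY: "V \<times> Y = T \<times> Y \<union> ?S \<times> Y" using T by auto
    have "mat_vec R H (V \<times> Y) c row = mat_vec R H (T \<times> Y) c row \<oplus> mat_vec R H (?S \<times> Y) c row"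
      unfolding VY
      by (rule mat_vec_Un_disjoint[OF finTY finSY]) (use H_closed[OF r] PiE_mem[OF c_closed] VY in auto)
    also have "mat_vec R H (T \<times> Y) c row = mat_vec R H (T \<times> Y) u row"
      using HT[OF r] u T unfolding c_def by (intro mat_vec_cong) auto
    also have "mat_vec R H (?S \<times> Y) c row = mat_vec R H (?S \<times> Y) w row"
      by (rule mat_vec_cong) (use c_on_S HS[OF r] PiE_mem[OF w(1)] in auto)
    also have "\<dots> = u' row" using w(2) r by blast
    finally have "mat_vec R H (V \<times> Y) c row = mat_vec R H (T \<times> Y) u row \<oplus> u' row" .
    moreover have "mat_vec R H (T \<times> Y) u row \<in> carrier R"
      using HT[OF r] u by (intro mat_vec_closed) auto
    ultimately show ?thesis unfolding u'_def by (simp add: r_neg)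
  qed
  then have "c \<in> C" using c_closed unfolding in_code_iff by simp
  moreover have "\<forall>i\<in>T \<times> Y. c i = u i" unfolding c_def using T by auto
  ultimately show ?thesis by blast
qed

lemma eq_if_agree_on_information_set:
  assumes "c \<in> C" "c' \<in> C" "\<forall>i\<in>T \<times> Y. c i = c' i"
  shows "c = c'"
proof -
  let ?d = "\<lambda>i\<in>V \<times> Y. c i \<ominus> c' i"
  have "block_support ?d \<subseteq> V - T"
    using assms code_closed unfolding block_support_def by fastforce
  then have "card (block_support ?d) \<le> n - k"
    using card_complement finite_V by (metis card_mono finite_Diff)
  then have "?d = zero_word" using eq_zero_word_if_small_support diff_in_code assms by blast
  then show ?thesis using eq_if_diff_eq_zero_word assms by blast
qed

definition unit_codeword :: "'v \<times> 'y \<Rightarrow> 'v \<times> 'y \<Rightarrow> 'f" where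
  "unit_codeword i = (SOME c. c \<in> C \<and> (\<forall>j\<in>T \<times> Y. c j = (if j = i then \<one> else \<zero>)))"

lemma unit_codeword:
  assumes "i \<in> T \<times> Y"
  shows "unit_codeword i \<in> C" "\<And>j. j \<in> T \<times> Y \<Longrightarrow> unit_codeword i j = (if j = i then \<one> else \<zero>)"
proof -
  have "\<exists>c\<in>C. \<forall>j\<in>T \<times> Y. c j = (if j = i then \<one> else \<zero>)"
    by (intro extends_from_information_set) auto
  then have "\<exists>c. c \<in> C \<and> (\<forall>j\<in>T \<times> Y. c j = (if j = i then \<one> else \<zero>))" by blast
  then have "unit_codeword i \<in> C \<and> (\<forall>j\<in>T \<times> Y. unit_codeword i j = (if j = i then \<one> else \<zero>))"
    unfolding unit_codeword_def by (rule someI_ex)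
  then show "unit_codeword i \<in> C" "\<And>j. j \<in> T \<times> Y \<Longrightarrow> unit_codeword i j = (if j = i then \<one> else \<zero>)"
    by auto
qed

lemma inj_on_unit_codeword: "inj_on unit_codeword (T \<times> Y)"
proof (rule inj_onI)
  fix i j assume ij: "i \<in> T \<times> Y" "j \<in> T \<times> Y" "unit_codeword i = unit_codeword j"
  then have "unit_codeword j i = \<one>" using unit_codeword(2)[OF ij(1) ij(1)] by simp
  then show "i = j" using unit_codeword(2)[OF ij(2) ij(1)] by (auto split: if_splits)
qed

lemma lin_comb_unit_codewords_apply:
  assumes f: "f \<in> unit_codeword ` (T \<times> Y) \<rightarrow> carrier R" and i: "i \<in> T \<times> Y"
  shows "lin_comb R (V \<times> Y) (unit_codeword ` (T \<times> Y)) f i = f (unit_codeword i)"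
proof -
  have finTY: "finite (T \<times> Y)" using T finite_V finite_Y by (auto intro: finite_subset)
  have fc: "f (unit_codeword j) \<in> carrier R" if "j \<in> T \<times> Y" for j using f that by auto
  have "lin_comb R (V \<times> Y) (unit_codeword ` (T \<times> Y)) f i = (\<Oplus>e\<in>unit_codeword ` (T \<times> Y). f e \<otimes> e i)"
    unfolding lin_comb_def using i T by auto
  also have "\<dots> = (\<Oplus>j\<in>T \<times> Y. f (unit_codeword j) \<otimes> unit_codeword j i)"
    using fc unit_codeword i by (intro finsum_reindex[OF _ inj_on_unit_codeword]) auto
  also have "\<dots> = (\<Oplus>j\<in>T \<times> Y. if i = j then f (unit_codeword j) else \<zero>)"
    using fc unit_codeword(2) i by (intro finsum_cong') auto
  also have "\<dots> = f (unit_codeword i)"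
    using fc i finTY by (intro finsum_singleton) auto
  finally show ?thesis .
qed

lemma lin_comb_unit_codewords_in_code:
  assumes f: "f \<in> unit_codeword ` (T \<times> Y) \<rightarrow> carrier R"
  shows "lin_comb R (V \<times> Y) (unit_codeword ` (T \<times> Y)) f \<in> C"
  unfolding in_code_iff
proof (intro conjI ballI)
  let ?B = "unit_codeword ` (T \<times> Y)"
  have finB: "finite ?B" using T finite_V finite_Y by (auto intro: finite_subset)
  have BC: "?B \<subseteq> C" using unit_codeword(1) by auto
  have Bc: "u i \<in> carrier R" if "u \<in> ?B" "i \<in> V \<times> Y" for u i
    using that code_closed BC by blast
  have fu: "f u \<otimes> u i \<in> carrier R" if "u \<in> ?B" "i \<in> V \<times> Y" for u i
    using f that Bc by blast
  show "lin_comb R (V \<times> Y) ?B f \<in> V \<times> Y \<rightarrow>\<^sub>E carrier R"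
    unfolding lin_comb_def using fu by (auto intro!: finsum_closed)
  fix row assume r: "row \<in> Rw"
  have "mat_vec R H (V \<times> Y) (lin_comb R (V \<times> Y) ?B f) row = mat_vec R H (V \<times> Y) (\<lambda>i. \<Oplus>u\<in>?B. f u \<otimes> u i) row"
    unfolding lin_comb_def using fu H_closed r by (intro mat_vec_cong) (auto intro!: finsum_closed)
  also have "\<dots> = (\<Oplus>u\<in>?B. f u \<otimes> mat_vec R H (V \<times> Y) u row)"
    using finite_VY finB H_closed r Bc f by (intro mat_vec_finsum) auto
  also have "\<dots> = \<zero>"
  proof (intro add.finprod_one_eqI)
    fix u assume "u \<in> ?B"
    then have "u \<in> C" "f u \<in> carrier R" using BC f by auto
    then show "f u \<otimes> mat_vec R H (V \<times> Y) u row = \<zero>" using r unfolding in_code_iff by simp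
  qed
  finally show "mat_vec R H (V \<times> Y) (lin_comb R (V \<times> Y) ?B f) row = \<zero>" .
qed

lemma has_dim_code: "has_dim R (V \<times> Y) C (k * card Y)"
  unfolding has_dim_def
proof (intro exI conjI)
  let ?B = "unit_codeword ` (T \<times> Y)"
  show "?B \<subseteq> C" using unit_codeword(1) by auto
  show "card ?B = k * card Y"
    using card_image[OF inj_on_unit_codeword] T finite_Y by (simp add: card_cartesian_product)
  show "lin_indep R (V \<times> Y) ?B"
    unfolding lin_indep_def
  proof (intro conjI ballI allI impI)
    show "finite ?B" using T finite_V finite_Y by (auto intro: finite_subset)
    fix f e assume f: "f \<in> ?B \<rightarrow> carrier R" and z: "lin_comb R (V \<times> Y) ?B f = (\<lambda>i\<in>V \<times> Y. \<zero>)"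
      and e: "e \<in> ?B"
    then obtain i where i: "i \<in> T \<times> Y" "e = unit_codeword i" by auto
    then have "lin_comb R (V \<times> Y) ?B f i = \<zero>" using z T by auto
    then show "f e = \<zero>" using lin_comb_unit_codewords_apply[OF f i(1)] i(2) by simp
  qed
  show "lin_span R (V \<times> Y) ?B = C"
  proof (intro equalityI subsetI)
    fix c assume "c \<in> lin_span R (V \<times> Y) ?B"
    then show "c \<in> C" unfolding lin_span_def using lin_comb_unit_codewords_in_code by auto
  next
    fix c assume c: "c \<in> C"
    define f where "f e = c (inv_into (T \<times> Y) unit_codeword e)" for e
    have f: "f \<in> ?B \<rightarrow> carrier R"
      unfolding f_def using code_closed[OF c] T by (auto simp: inv_into_f_f[OF inj_on_unit_codeword])
    have "lin_comb R (V \<times> Y) ?B f = c"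
      using lin_comb_unit_codewords_apply[OF f] inv_into_f_f[OF inj_on_unit_codeword]
      by (intro eq_if_agree_on_information_set lin_comb_unit_codewords_in_code f c) (simp add: f_def)
    then show "c \<in> lin_span R (V \<times> Y) ?B" unfolding lin_span_def using f by blast
  qed
qed

lemma min_distance_attained: "\<exists>c\<in>C. \<exists>c'\<in>C. c \<noteq> c' \<and> hamming V Y c c' = n - k + 1"
proof -
  obtain v0 where v0: "v0 \<in> T" using T k_pos by fastforce
  obtain y0 where y0: "y0 \<in> Y" using Y_nonempty by blast
  let ?c = "unit_codeword (v0, y0)"
  have i0: "(v0, y0) \<in> T \<times> Y" using v0 y0 by simp
  have cC: "?c \<in> C" by (rule unit_codeword(1)[OF i0])
  have "?c (v0, y0) = \<one>" using unit_codeword(2)[OF i0 i0] by simp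
  then have ne: "?c \<noteq> zero_word" using i0 T unfolding zero_word_def by auto
  have "block_support (\<lambda>i\<in>V \<times> Y. ?c i \<ominus> zero_word i) \<subseteq> insert v0 (V - T)"
    using unit_codeword(2)[OF i0] code_closed[OF cC]
    unfolding block_support_def zero_word_def by (force split: if_splits)
  then have "card (block_support (\<lambda>i\<in>V \<times> Y. ?c i \<ominus> zero_word i)) \<le> n - k + 1"
    using card_complement finite_V card_insert_le_m1
    by (metis (no_types, lifting) Suc_eq_plus1 card_insert_if card_mono finite_Diff finite_insert le_SucI)
  then have "hamming V Y ?c zero_word \<le> n - k + 1"
    using hamming_eq_card_block_support[OF cC zero_word_in_code] by simp
  moreover have "n - k + 1 \<le> hamming V Y ?c zero_word"
    by (rule min_distance[OF cC zero_word_in_code ne])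
  ultimately show ?thesis using cC zero_word_in_code ne by (intro bexI[of _ ?c] bexI[of _ zero_word]) auto
qed

end

theorem is_vector_code: "is_vector_code R V Y C n (k * card Y) (n - k + 1) (card Y)"
proof -
  obtain T where "T \<subseteq> V" "card T = k" using obtain_subset_with_card_n[of k V] k_le_n card_V by metis
  then show ?thesis
    unfolding is_vector_code_def
    using card_V lin_subspace_code has_dim_code min_distance min_distance_attained by blast
qed

end

section \<open>The construction\<close>

lemma cs_nodes_eq: "cs_nodes t q s = ({1..t-1} \<times> {..<q}) \<union> ({t} \<times> {..<s})"
  unfolding cs_nodes_def by auto

lemma finite_cs_nodes: "finite (cs_nodes t q s)"
  unfolding cs_nodes_eq by simp

lemma card_cs_nodes:
  assumes "1 < t"
  shows "card (cs_nodes t q s) = (t - 1) * q + s"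
proof -
  have "({1..t-1} \<times> {..<q}) \<inter> ({t} \<times> {..<s}) = {}" using assms by auto
  then show ?thesis unfolding cs_nodes_eq by (simp add: card_Un_disjoint card_cartesian_product)
qed

lemma cs_iota_image:
  assumes "s \<le> q" "n = (t - 1) * q + s"
  shows "cs_iota q ` cs_nodes t q s \<subseteq> {1..n}"
proof
  fix m assume "m \<in> cs_iota q ` cs_nodes t q s"
  then obtain j \<theta> where v: "(j, \<theta>) \<in> cs_nodes t q s" and m: "m = (j - 1) * q + \<theta> + 1"
    unfolding cs_iota_def by auto
  have "(j - 1) * q + \<theta> + 1 \<le> n"
  proof (cases "j = t")
    case True
    then show ?thesis using v assms(2) unfolding cs_nodes_def by auto
  next
    case False
    then have j: "1 \<le> j" "j \<le> t - 1" "\<theta> < q" using v unfolding cs_nodes_def by auto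
    have "(j - 1) * q + \<theta> + 1 \<le> (j - 1) * q + q" using j by simp
    also have "\<dots> = j * q" using j by (cases j) auto
    also have "\<dots> \<le> (t - 1) * q" using j by (intro mult_le_mono1)
    finally show ?thesis using assms(2) by simp
  qed
  then show "m \<in> {1..n}" using m by simp
qed

lemma inj_on_cs_iota:
  assumes "s \<le> q" "1 \<le> t"
  shows "inj_on (cs_iota q) (cs_nodes t q s)"
proof (rule inj_onI)
  fix v v' assume v: "v \<in> cs_nodes t q s" and v': "v' \<in> cs_nodes t q s" and eq: "cs_iota q v = cs_iota q v'"
  obtain j \<theta> j' \<theta>' where vv: "v = (j, \<theta>)" "v' = (j', \<theta>')" by (cases v, cases v')
  have h: "1 \<le> j" "\<theta> < q" "1 \<le> j'" "\<theta>' < q" using v v' vv assms unfolding cs_nodes_def by auto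
  have e: "(j - 1) * q + \<theta> = (j' - 1) * q + \<theta>'" using eq vv unfolding cs_iota_def by simp
  \<comment> \<open>\<open>cs_iota\<close> is the mixed-radix encoding \<open>(j - 1, \<theta>)\<close> with digit \<open>\<theta> < q\<close>.\<close>
  have "\<theta> = \<theta>'" using arg_cong[OF e, of "\<lambda>x. x mod q"] h by simp
  moreover have "j - 1 = j' - 1" using arg_cong[OF e, of "\<lambda>x. x div q"] h by simp
  ultimately show "v = v'" using vv h by simp
qed

lemma finite_cs_states: "finite (cs_states t q)"
  unfolding cs_states_def by (simp add: finite_PiE)

lemma card_cs_states: "card (cs_states t q) = q ^ t"
  unfolding cs_states_def by (simp add: card_PiE)

lemma cs_states_nonempty: "0 < q \<Longrightarrow> cs_states t q \<noteq> {}"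
  unfolding cs_states_def by (auto simp: PiE_eq_empty_iff)

definition cs_coupling :: "('f, 'm) ring_scheme \<Rightarrow> nat \<Rightarrow> nat \<Rightarrow> nat \<Rightarrow> nat
    \<Rightarrow> nat \<times> (nat \<Rightarrow> nat) \<Rightarrow> (nat \<times> nat) \<times> (nat \<Rightarrow> nat) \<Rightarrow> 'f" where
  "cs_coupling R n d t q row col =
     (if n - d < fst row \<and> (\<exists>j\<in>{1..t}. fst col = (j, snd row j) \<and>
        snd col = cs_shift q (snd row) j (fst row - (n - d))) then one R else zero R)"

lemma (in ring) cs_H_eq:
  assumes "\<rho> \<in> carrier R"
  shows "cs_H R a b n d t q \<rho> = (\<lambda>row col.
    kron_identity R (cauchy_matrix R a (\<lambda>v. b (cs_iota q v))) row col \<oplus> \<rho> \<otimes> cs_coupling R n d t q row col)"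
proof -
  have "\<rho> \<otimes> (if P then \<one> else \<zero>) = (if P then \<rho> else \<zero>)" for P using assms by simp
  then show ?thesis
    by (intro ext) (simp only: cs_H_def Let_def kron_identity_def cauchy_matrix_def cs_coupling_def)
qed

context field
begin

lemma exists_scalar_nonsingular_on_all_blocks:
  assumes fin: "finite (carrier R)" "finite V" "finite Y" "finite Rw"
    and M: "\<And>row col. row \<in> Rw \<Longrightarrow> col \<in> V \<times> Y \<Longrightarrow> M row col \<in> carrier R"
    and E: "\<And>row col. row \<in> Rw \<Longrightarrow> col \<in> V \<times> Y \<Longrightarrow> E row col \<in> carrier R"
    and M_blocks: "\<And>S w. S \<subseteq> V \<Longrightarrow> card S = m \<Longrightarrow> w \<in> S \<times> Y \<rightarrow> carrier R \<Longrightarrow>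
        \<forall>row\<in>Rw. mat_vec R M (S \<times> Y) w row = \<zero> \<Longrightarrow> \<forall>col\<in>S \<times> Y. w col = \<zero>"
    and big: "2 ^ card V * (m * card Y) + 2 \<le> card (carrier R)"
  shows "\<exists>\<rho>\<in>carrier R - {\<zero>}. \<forall>S w. S \<subseteq> V \<longrightarrow> card S = m \<longrightarrow> w \<in> S \<times> Y \<rightarrow> carrier R \<longrightarrow>
      (\<forall>row\<in>Rw. mat_vec R (\<lambda>i j. M i j \<oplus> \<rho> \<otimes> E i j) (S \<times> Y) w row = \<zero>) \<longrightarrow> (\<forall>col\<in>S \<times> Y. w col = \<zero>)"
proof -
  define blocks where "blocks = {S. S \<subseteq> V \<and> card S = m}"
  define bad where "bad S = {\<rho>\<in>carrier R - {\<zero>}. \<exists>w\<in>S \<times> Y \<rightarrow> carrier R. (\<exists>j\<in>S \<times> Y. w j \<noteq> \<zero>) \<and>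
      (\<forall>i\<in>Rw. mat_vec R (\<lambda>i j. M i j \<oplus> \<rho> \<otimes> E i j) (S \<times> Y) w i = \<zero>)}" for S
  have card_bad: "card (bad S) \<le> m * card Y" if S: "S \<in> blocks" for S
  proof -
    have SV: "S \<subseteq> V" and card_S: "card S = m" using S unfolding blocks_def by auto
    then have "finite (S \<times> Y)" using fin(2,3) finite_subset by blast
    then have "card (bad S) \<le> card (S \<times> Y)"
      unfolding bad_def using M E SV M_blocks[OF SV card_S]
      by (intro card_singular_pencil_values_le[OF fin(1,4)]) auto
    then show ?thesis using card_S by (simp add: card_cartesian_product)
  qed
  have card_blocks: "card blocks \<le> 2 ^ card V"
    using fin(2) card_mono[of "Pow V" blocks] unfolding blocks_def by (auto simp: card_Pow)
  have "finite blocks" using fin(2) unfolding blocks_def by simp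
  then have "card (\<Union>S\<in>blocks. bad S) \<le> (\<Sum>S\<in>blocks. card (bad S))" by (rule card_UN_le)
  also have "\<dots> \<le> card blocks * (m * card Y)"
    using sum_bounded_above[of blocks "\<lambda>S. card (bad S)" "m * card Y"] card_bad by simp
  also have "\<dots> \<le> 2 ^ card V * (m * card Y)" using card_blocks by simp
  finally have "card (\<Union>S\<in>blocks. bad S) < card (carrier R - {\<zero>})"
    using big fin(1) by simp
  moreover have "(\<Union>S\<in>blocks. bad S) \<subseteq> carrier R - {\<zero>}" unfolding bad_def by auto
  ultimately have "\<not> carrier R - {\<zero>} \<subseteq> (\<Union>S\<in>blocks. bad S)"
    using card_mono[of "\<Union>S\<in>blocks. bad S"] fin(1) finite_subset by (metis finite_Diff not_le)
  then obtain \<rho> where \<rho>: "\<rho> \<in> carrier R - {\<zero>}" "\<rho> \<notin> (\<Union>S\<in>blocks. bad S)"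
    by blast
  then show ?thesis unfolding blocks_def bad_def by blast
qed

lemma cauchy_blocks_independent:
  assumes a: "a ` {1..N} \<subseteq> carrier R" "inj_on a {1..N}" and b: "b ` {1..n} \<subseteq> carrier R" "inj_on b {1..n}"
    and ab: "a ` {1..N} \<inter> b ` {1..n} = {}"
    and \<iota>: "\<iota> ` V \<subseteq> {1..n}" "inj_on \<iota> V" and S: "S \<subseteq> V" "finite S" "card S = N" and finY: "finite Y"
    and w: "w \<in> S \<times> Y \<rightarrow> carrier R"
    and z: "\<forall>row\<in>{1..N} \<times> Y. mat_vec R (kron_identity R (cauchy_matrix R a (\<lambda>v. b (\<iota> v)))) (S \<times> Y) w row = \<zero>"
  shows "\<forall>col\<in>S \<times> Y. w col = \<zero>"
proof (rule kron_identity_kernel_trivial[OF S(2) finY _ _ w z])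
  show "cauchy_matrix R a (\<lambda>v. b (\<iota> v)) i v \<in> carrier R" if "i \<in> {1..N}" "v \<in> S" for i v
  proof -
    have "\<iota> v \<in> {1..n}" using \<iota>(1) S(1) that(2) by blast
    then show ?thesis
      using that(1) a(1) b(1) ab unfolding cauchy_matrix_def by (intro inv_diff_closed) blast+
  qed
  show "\<forall>v\<in>S. u v = \<zero>"
    if "u \<in> S \<rightarrow> carrier R" "\<forall>i\<in>{1..N}. mat_vec R (cauchy_matrix R a (\<lambda>v. b (\<iota> v))) S u i = \<zero>" for u
  proof (rule cauchy_kernel_trivial[OF S(2) _ _ a(1) _ a(2) _ _ that])
    have \<iota>S: "\<iota> ` S \<subseteq> {1..n}" "inj_on \<iota> S" using \<iota> S(1) inj_on_subset by blast+
    show "(\<lambda>v. b (\<iota> v)) ` S \<subseteq> carrier R" "a ` {1..N} \<inter> (\<lambda>v. b (\<iota> v)) ` S = {}"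
      using \<iota>S(1) b(1) ab by blast+
    show "inj_on (\<lambda>v. b (\<iota> v)) S"
      using comp_inj_on[OF \<iota>S(2) inj_on_subset[OF b(2) \<iota>S(1)]] by (simp add: comp_def)
  qed (use S(3) in auto)
qed

lemma cs_cauchy_part_closed:
  assumes s: "s \<le> q" and n: "n = (t - 1) * q + s"
    and a: "a ` {1..n-k} \<subseteq> carrier R" and b: "b ` {1..n} \<subseteq> carrier R"
    and ab: "a ` {1..n-k} \<inter> b ` {1..n} = {}"
    and row: "fst row \<in> {1..n-k}" and col: "fst col \<in> cs_nodes t q s"
  shows "kron_identity R (cauchy_matrix R a (\<lambda>v. b (cs_iota q v))) row col \<in> carrier R"
proof -
  have "cs_iota q (fst col) \<in> {1..n}" using cs_iota_image[OF s n] col by blast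
  then have "inv (a (fst row) \<ominus> b (cs_iota q (fst col))) \<in> carrier R"
    using row a b ab by (intro inv_diff_closed) blast+
  then show ?thesis unfolding kron_identity_def cauchy_matrix_def by simp
qed

lemma cs_exists_scalar_blocks_independent:
  fixes a b :: "nat \<Rightarrow> 'a"
  assumes t: "1 < t" and s: "s \<le> q" "0 < q" and n: "n = (t - 1) * q + s"
    and fin: "finite (carrier R)" and big: "2 ^ n * ((n - k) * q ^ t) + 2 \<le> card (carrier R)"
    and a: "a ` {1..n-k} \<subseteq> carrier R" "inj_on a {1..n-k}" and b: "b ` {1..n} \<subseteq> carrier R" "inj_on b {1..n}"
    and ab: "a ` {1..n-k} \<inter> b ` {1..n} = {}"
  shows "\<exists>\<rho>\<in>carrier R - {\<zero>}. \<forall>S w. S \<subseteq> cs_nodes t q s \<longrightarrow> card S = n - k \<longrightarrow>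
      w \<in> S \<times> cs_states t q \<rightarrow> carrier R \<longrightarrow>
      (\<forall>row\<in>{1..n-k} \<times> cs_states t q. mat_vec R (cs_H R a b n d t q \<rho>) (S \<times> cs_states t q) w row = \<zero>) \<longrightarrow>
      (\<forall>col\<in>S \<times> cs_states t q. w col = \<zero>)"
proof -
  let ?V = "cs_nodes t q s" and ?Y = "cs_states t q"
  define M :: "nat \<times> (nat \<Rightarrow> nat) \<Rightarrow> (nat \<times> nat) \<times> (nat \<Rightarrow> nat) \<Rightarrow> 'a"
    where "M = kron_identity R (cauchy_matrix R a (\<lambda>v. b (cs_iota q v)))"
  have finV: "finite ?V" and card_V: "card ?V = n" and finY: "finite ?Y" and card_Y: "card ?Y = q ^ t"
    using finite_cs_nodes card_cs_nodes[OF t] finite_cs_states card_cs_states n by auto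
  have \<iota>: "cs_iota q ` ?V \<subseteq> {1..n}" "inj_on (cs_iota q) ?V"
    using cs_iota_image[OF s(1) n] inj_on_cs_iota[OF s(1)] t by auto
  have M_blocks: "\<forall>col\<in>S \<times> ?Y. w col = \<zero>"
    if "S \<subseteq> ?V" "card S = n - k" "w \<in> S \<times> ?Y \<rightarrow> carrier R"
      "\<forall>row\<in>{1..n-k} \<times> ?Y. mat_vec R M (S \<times> ?Y) w row = \<zero>" for S w
    using that finite_subset[OF that(1) finV] finY
    unfolding M_def by (intro cauchy_blocks_independent[OF a b ab \<iota>]) auto
  have M_closed: "M row col \<in> carrier R" if "row \<in> {1..n-k} \<times> ?Y" "col \<in> ?V \<times> ?Y" for row col
    using that unfolding M_def by (intro cs_cauchy_part_closed[OF s(1) n a(1) b(1) ab]) auto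
  have E_closed: "cs_coupling R n d t q row col \<in> carrier R"
    if "row \<in> {1..n-k} \<times> ?Y" "col \<in> ?V \<times> ?Y" for row col
    unfolding cs_coupling_def by simp
  have finRw: "finite ({1..n-k} \<times> ?Y)" using finY by simp
  have big': "2 ^ card ?V * ((n - k) * card ?Y) + 2 \<le> card (carrier R)"
    using big card_V card_Y by simp
  have "\<exists>\<rho>\<in>carrier R - {\<zero>}. \<forall>S w. S \<subseteq> ?V \<longrightarrow> card S = n - k \<longrightarrow> w \<in> S \<times> ?Y \<rightarrow> carrier R \<longrightarrow>
      (\<forall>row\<in>{1..n-k} \<times> ?Y. mat_vec R (\<lambda>i j. M i j \<oplus> \<rho> \<otimes> cs_coupling R n d t q i j) (S \<times> ?Y) w row = \<zero>) \<longrightarrow>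
      (\<forall>col\<in>S \<times> ?Y. w col = \<zero>)"
    by (rule exists_scalar_nonsingular_on_all_blocks) (fact fin finV finY finRw M_closed M_blocks big' E_closed)+
  then obtain \<rho> where \<rho>: "\<rho> \<in> carrier R - {\<zero>}" and blocks: "\<forall>S w. S \<subseteq> ?V \<longrightarrow> card S = n - k \<longrightarrow>
      w \<in> S \<times> ?Y \<rightarrow> carrier R \<longrightarrow>
      (\<forall>row\<in>{1..n-k} \<times> ?Y. mat_vec R (\<lambda>i j. M i j \<oplus> \<rho> \<otimes> cs_coupling R n d t q i j) (S \<times> ?Y) w row = \<zero>) \<longrightarrow>
      (\<forall>col\<in>S \<times> ?Y. w col = \<zero>)"
    by (rule bexE)
  have "cs_H R a b n d t q \<rho> = (\<lambda>i j. M i j \<oplus> \<rho> \<otimes> cs_coupling R n d t q i j)"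
    unfolding M_def using \<rho> by (intro cs_H_eq) simp
  then show ?thesis using \<rho> blocks by (intro bexI[of _ \<rho>]) simp_all
qed

lemma cs_code_is_mds:
  fixes a b :: "nat \<Rightarrow> 'a"
  assumes k: "1 \<le> k" "k \<le> n" and t: "1 < t" and q: "q = d - k + 1" and s: "s \<le> q"
    and n: "n = (t - 1) * q + s"
    and fin: "finite (carrier R)" and big: "2 ^ n * ((n - k) * q ^ t) + 2 \<le> card (carrier R)"
    and a: "a ` {1..n-k} \<subseteq> carrier R" "inj_on a {1..n-k}" and b: "b ` {1..n} \<subseteq> carrier R" "inj_on b {1..n}"
    and ab: "a ` {1..n-k} \<inter> b ` {1..n} = {}"
  shows "\<exists>\<rho>\<in>carrier R - {\<zero>}. is_vector_code R (cs_nodes t q s) (cs_states t q)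
            (cs_code R a b n k d t s \<rho>) n (k * q ^ t) (n - k + 1) (q ^ t)"
proof -
  let ?V = "cs_nodes t q s" and ?Y = "cs_states t q"
  have q0: "0 < q" using q by simp
  obtain \<rho> where \<rho>: "\<rho> \<in> carrier R" "\<rho> \<noteq> \<zero>" and blocks: "\<forall>S w. S \<subseteq> ?V \<longrightarrow> card S = n - k \<longrightarrow>
      w \<in> S \<times> ?Y \<rightarrow> carrier R \<longrightarrow>
      (\<forall>row\<in>{1..n-k} \<times> ?Y. mat_vec R (cs_H R a b n d t q \<rho>) (S \<times> ?Y) w row = \<zero>) \<longrightarrow>
      (\<forall>col\<in>S \<times> ?Y. w col = \<zero>)"
    using cs_exists_scalar_blocks_independent[OF t s q0 n fin big a b ab] by blast
  have finV: "finite ?V" and card_V: "card ?V = n" and finY: "finite ?Y" and "?Y \<noteq> {}"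
    and finRw: "finite ({1..n-k} \<times> ?Y)" and card_Rw: "card ({1..n-k} \<times> ?Y) = (n - k) * card ?Y"
    using finite_cs_nodes card_cs_nodes[OF t] finite_cs_states cs_states_nonempty[OF q0] n
    by (auto simp: card_cartesian_product)
  interpret parity_check_mds R ?V ?Y "{1..n-k} \<times> ?Y" "cs_H R a b n d t q \<rho>" n k "cs_code R a b n k d t s \<rho>"
  proof unfold_locales
    show "cs_H R a b n d t q \<rho> row col \<in> carrier R"
      if "row \<in> {1..n-k} \<times> ?Y" "col \<in> ?V \<times> ?Y" for row col
      using that \<rho>(1) cs_cauchy_part_closed[OF s n a(1) b(1) ab, of row col]
      by (simp add: cs_H_eq cs_coupling_def mem_Times_iff)
    show "cs_code R a b n k d t s \<rho> = {c \<in> ?V \<times> ?Y \<rightarrow>\<^sub>E carrier R.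
        \<forall>row\<in>{1..n-k} \<times> ?Y. mat_vec R (cs_H R a b n d t q \<rho>) (?V \<times> ?Y) c row = \<zero>}"
      unfolding cs_code_def Let_def q[symmetric] mat_vec_def by auto
    show "\<forall>col\<in>S \<times> ?Y. w col = \<zero>"
      if "S \<subseteq> ?V" "card S = n - k" "w \<in> S \<times> ?Y \<rightarrow> carrier R"
        "\<forall>row\<in>{1..n-k} \<times> ?Y. mat_vec R (cs_H R a b n d t q \<rho>) (S \<times> ?Y) w row = \<zero>" for S w
      using blocks that by blast
  qed (fact fin finV finY \<open>?Y \<noteq> {}\<close> finRw card_V k card_Rw)+
  show ?thesis
    using is_vector_code \<rho> card_cs_states by auto
qed

end

theorem theorem1:
  fixes n k d t s :: nat
  assumes "1 \<le> k" and "k < d" and "d \<le> n - 1"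
    and "1 < t" and "1 \<le> s" and "s \<le> d - k"
    and "n = (t - 1) * (d - k + 1) + s"
  shows "\<exists>Q0::nat. \<forall>(R :: nat ring) (a :: nat \<Rightarrow> nat) (b :: nat \<Rightarrow> nat).
           field R \<and> finite (carrier R) \<and> Q0 \<le> card (carrier R) \<and>
           a ` {1..n-k} \<subseteq> carrier R \<and> b ` {1..n} \<subseteq> carrier R \<and>
           inj_on a {1..n-k} \<and> inj_on b {1..n} \<and> a ` {1..n-k} \<inter> b ` {1..n} = {}
           \<longrightarrow> (\<exists>\<rho>\<in>carrier R - {zero R}.
                 is_vector_code R (cs_nodes t (d - k + 1) s) (cs_states t (d - k + 1))
                   (cs_code R a b n k d t s \<rho>) n (k * (d - k + 1) ^ t) (n - k + 1) ((d - k + 1) ^ t))"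
proof (intro exI[of _ "2 ^ n * ((n - k) * (d - k + 1) ^ t) + 2"] allI impI, elim conjE)
  fix R :: "nat ring" and a b :: "nat \<Rightarrow> nat"
  assume "field R" and hyps: "finite (carrier R)" "2 ^ n * ((n - k) * (d - k + 1) ^ t) + 2 \<le> card (carrier R)"
    "a ` {1..n-k} \<subseteq> carrier R" "b ` {1..n} \<subseteq> carrier R" "inj_on a {1..n-k}" "inj_on b {1..n}"
    "a ` {1..n-k} \<inter> b ` {1..n} = {}"
  have "k \<le> n" "s \<le> d - k + 1" using assms(2,3,6) by linarith+
  with \<open>field R\<close> show "\<exists>\<rho>\<in>carrier R - {zero R}.
      is_vector_code R (cs_nodes t (d - k + 1) s) (cs_states t (d - k + 1))
        (cs_code R a b n k d t s \<rho>) n (k * (d - k + 1) ^ t) (n - k + 1) ((d - k + 1) ^ t)"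
    by (intro field.cs_code_is_mds) (use assms hyps in auto)
qed

end
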